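(* There is an absolute constant $C>0$ such that the following holds. Let $\varepsilon\in(0,1)$, $\delta\in(0,1/2]$, $n,s\in\mathbb{N}$, $k\ge2$, $\nu=\lceil n/s\rceil+1$, $\eta\ge0$, and let $W\in\mathbb{R}^{k\times\nu}$. There exists an $(\varepsilon,\delta)$-LNDP algorithm $\mathcal{A}^{W,\eta}$ such that for every graph $G$ on node set $[n]$, \[ \mathbb{E}\big[\|\mathcal{A}^{W,\eta}(G)-W\tilde f_{G,s}\|_\infty\big]\le C\Big(\eta+\gamma_\eta(W)\sqrt{\Big(\frac1n+\frac1{s^2}\Big)\log k}\cdot\frac{\sqrt{\log(1/\delta)}}{\varepsilon}\Big), \] where $\gamma_\eta(W)=\min\{\|L\|_{2\to\infty}\|R\|_{1\to2}: L\in\mathbb{R}^{k\times\ell},R\in\mathbb{R}^{\ell\times\nu},\ell\in\mathbb{N},\ \|LR-W\|_{1\to\infty}\le\eta\}$.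
   Context: Graphs are simple and undirected on node set $[n]$; $N_i^G$ is the neighborhood of node $i$ and $d_i=|N_i^G|$. Two graphs on $[n]$ are node neighbors if they differ only in edges incident to a single node. Random variables $R_1,R_2$ are $(\varepsilon,\delta)$-indistinguishable if for every event $Y$, $\Pr[R_1\in Y]\le e^\varepsilon\Pr[R_2\in Y]+\delta$ and symmetrically. An algorithm $\mathcal{A}$ on $n$-node graphs is (noninteractive) $(\varepsilon,\delta)$-LNDP if there exist a distribution over public random strings $\rho$, local randomizers $\mathcal{R}_{1,\rho},\dots,\mathcal{R}_{n,\rho}$ (with independent internal randomness), and a postprocessing $\mathcal{P}$ with $\mathcal{A}(G)=\mathcal{P}(\mathcal{R}_{1,\rho}(N_1^G),\dots,\mathcal{R}_{n,\rho}(N_n^G))$, such that for every fixed $\rho$ and every node-neighboring $G,G'$ the randomizer output vectors on $G$ and $G'$ are $(\varepsilon,\delta)$-indistinguishable. The degree distribution of $G$ is $f_G(d)=\frac1n|\{i:d_i=d\}|$, $d\in\{0,\dots,n-1\}$. For $s\in\mathbb{N}$, $R_s(x)=s(\lfloor x/s\rfloor+B)$ with $B\sim\mathrm{Bern}(x/s-\lfloor x/s\rfloor)$. The compressed blurry degree distribution $\tilde f_{G,s}$ is the law of $R_s(X)/s$ for $X\sim f_G$, viewed as a vector in $\mathbb{R}^\nu$ indexed by $0,\dots,\nu-1$. For a matrix $A$: $\|A\|_{1\to2}$ is the maximum $\ell_2$ norm of a column, $\|A\|_{2\to\infty}$ the maximum $\ell_2$ norm of a row, $\|A\|_{1\to\infty}$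 the maximum absolute entry. *)

theory Defs
  imports "HOL-Probability.Probability"
begin

definition simple_graph :: "nat \<Rightarrow> nat set set \<Rightarrow> bool" where
  "simple_graph n G \<longleftrightarrow> (\<forall>e\<in>G. \<exists>i j. i \<noteq> j \<and> i < n \<and> j < n \<and> e = {i, j})"

definition nbhd :: "nat set set \<Rightarrow> nat \<Rightarrow> nat set" where
  "nbhd G i = {j. {i, j} \<in> G \<and> j \<noteq> i}"

definition deg :: "nat set set \<Rightarrow> nat \<Rightarrow> nat" where
  "deg G i = card (nbhd G i)"

definition node_neighbors :: "nat \<Rightarrow> nat set set \<Rightarrow> nat set set \<Rightarrow> bool" where
  "node_neighbors n G G' \<longleftrightarrow> (\<exists>v<n. \<forall>e. v \<notin> e \<longrightarrow> (e \<in> G \<longleftrightarrow> e \<in> G'))"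

definition degree_distribution :: "nat \<Rightarrow> nat set set \<Rightarrow> nat \<Rightarrow> real" where
  "degree_distribution n G d = real (card {i. i < n \<and> deg G i = d}) / real n"

text \<open>Probability that R_s(x)/s = j, where R_s(x) = s(floor(x/s) + B),
  B ~ Bern(x/s - floor(x/s)).\<close>
definition blur_prob :: "nat \<Rightarrow> nat \<Rightarrow> nat \<Rightarrow> real" where
  "blur_prob s x j =
     (let q = real x / real s - of_int \<lfloor>real x / real s\<rfloor>;
          b = nat \<lfloor>real x / real s\<rfloor>
      in (if j = b then 1 - q else 0) + (if j = b + 1 then q else 0))"

text \<open>Compressed blurry degree distribution: the law of R_s(X)/s for X ~ f_G,
  as a vector indexed by 0..nu-1.\<close>
definition blurry_deg_dist :: "nat \<Rightarrow> nat \<Rightarrow> nat set set \<Rightarrow> nat \<Rightarrow> real" where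
  "blurry_deg_dist n s G j = (\<Sum>d<n. degree_distribution n G d * blur_prob s d j)"

definition norm_2_inf :: "nat \<Rightarrow> nat \<Rightarrow> (nat \<Rightarrow> nat \<Rightarrow> real) \<Rightarrow> real" where
  "norm_2_inf m p A = Max {sqrt (\<Sum>j<p. (A i j)\<^sup>2) | i. i < m}"

definition norm_1_2 :: "nat \<Rightarrow> nat \<Rightarrow> (nat \<Rightarrow> nat \<Rightarrow> real) \<Rightarrow> real" where
  "norm_1_2 m p A = Max {sqrt (\<Sum>i<m. (A i j)\<^sup>2) | j. j < p}"

definition norm_1_inf :: "nat \<Rightarrow> nat \<Rightarrow> (nat \<Rightarrow> nat \<Rightarrow> real) \<Rightarrow> real" where
  "norm_1_inf m p A = Max {\<bar>A i j\<bar> | i j. i < m \<and> j < p}"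

definition mat_mult :: "nat \<Rightarrow> (nat \<Rightarrow> nat \<Rightarrow> real) \<Rightarrow> (nat \<Rightarrow> nat \<Rightarrow> real) \<Rightarrow> nat \<Rightarrow> nat \<Rightarrow> real" where
  "mat_mult l L R i j = (\<Sum>t<l. L i t * R t j)"

definition gamma_fact :: "real \<Rightarrow> nat \<Rightarrow> nat \<Rightarrow> (nat \<Rightarrow> nat \<Rightarrow> real) \<Rightarrow> real" where
  "gamma_fact \<eta> k \<nu> W = Inf {norm_2_inf k l L * norm_1_2 l \<nu> R | l L R.
       norm_1_inf k \<nu> (\<lambda>i j. mat_mult l L R i j - W i j) \<le> \<eta>}"

definition indist :: "real \<Rightarrow> real \<Rightarrow> 'a measure \<Rightarrow> 'a measure \<Rightarrow> bool" where
  "indist \<epsilon> \<delta> M1 M2 \<longleftrightarrow>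
     (\<forall>Y\<in>sets M1. measure M1 Y \<le> exp \<epsilon> * measure M2 Y + \<delta>) \<and>
     (\<forall>Y\<in>sets M2. measure M2 Y \<le> exp \<epsilon> * measure M1 Y + \<delta>)"

text \<open>Joint law of the randomizer outputs for fixed public string rho
  (independent internal randomness = product measure).\<close>
definition node_outputs :: "nat \<Rightarrow> ('r \<Rightarrow> nat \<Rightarrow> nat set \<Rightarrow> 'b measure) \<Rightarrow> 'r \<Rightarrow> nat set set \<Rightarrow> (nat \<Rightarrow> 'b) measure" where
  "node_outputs n R \<rho> G = PiM {..<n} (\<lambda>i. R \<rho> i (nbhd G i))"

definition alg_output :: "nat \<Rightarrow> 'r measure \<Rightarrow> ('r \<Rightarrow> nat \<Rightarrow> nat set \<Rightarrow> 'b measure) \<Rightarrow> ((nat \<Rightarrow> 'b) \<Rightarrow> 'o) \<Rightarrow> 'o measure \<Rightarrow> nat set set \<Rightarrow> 'o measure" where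
  "alg_output n Prho R P Out G = Prho \<bind> (\<lambda>\<rho>. distr (node_outputs n R \<rho> G) Out P)"

definition LNDP :: "real \<Rightarrow> real \<Rightarrow> nat \<Rightarrow> 'r measure \<Rightarrow> 'b measure \<Rightarrow> ('r \<Rightarrow> nat \<Rightarrow> nat set \<Rightarrow> 'b measure) \<Rightarrow> ((nat \<Rightarrow> 'b) \<Rightarrow> 'o) \<Rightarrow> 'o measure \<Rightarrow> bool" where
  "LNDP \<epsilon> \<delta> n Prho Mb R P Out \<longleftrightarrow>
     prob_space Prho \<and>
     (\<forall>\<rho>\<in>space Prho. \<forall>i<n. \<forall>S. S \<subseteq> {..<n} \<longrightarrow> R \<rho> i S \<in> space (prob_algebra Mb)) \<and>
     P \<in> measurable (PiM {..<n} (\<lambda>_. Mb)) Out \<and>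
     (\<forall>G. simple_graph n G \<longrightarrow>
        (\<lambda>\<rho>. distr (node_outputs n R \<rho> G) Out P) \<in> measurable Prho (subprob_algebra Out)) \<and>
     (\<forall>\<rho>\<in>space Prho. \<forall>G G'. simple_graph n G \<and> simple_graph n G' \<and> node_neighbors n G G' \<longrightarrow>
        indist \<epsilon> \<delta> (node_outputs n R \<rho> G) (node_outputs n R \<rho> G'))"

text \<open>Output space for estimates of vectors in R^k: functions nat => real (coordinates >= k unused).\<close>
definition vec_space :: "(nat \<Rightarrow> real) measure" where
  "vec_space = PiM UNIV (\<lambda>_. borel)"

definition sup_err :: "nat \<Rightarrow> (nat \<Rightarrow> real) \<Rightarrow> (nat \<Rightarrow> real) \<Rightarrow> real" where
  "sup_err k x y = Max {\<bar>x i - y i\<bar> | i. i < k}"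

end

theory Submission
  imports Defs
begin

text \<open>Factor \<open>W \<approx> L R\<close> so that the largest row norm \<open>a\<close> of \<open>L\<close> times the largest column norm
  \<open>r\<close> of \<open>R\<close> is at most \<open>2 \<gamma>\<^sub>\<eta>(W)\<close>. Node \<open>i\<close> releases \<open>R b\<^sub>i\<close> plus isotropic Gaussian noise of scale
  \<open>\<sigma>\<close>, where \<open>b\<^sub>i\<close> is the blurred indicator vector of its degree; the analyst averages the
  releases and applies \<open>L\<close>. This estimates \<open>L R f\<close> without bias, and \<open>L R f\<close> is \<open>\<eta>\<close>-close to
  \<open>W f\<close> because \<open>f\<close> is a probability vector.

  Rewiring one node changes its own \<open>b\<^sub>i\<close> by at most 2 in \<open>\<ell>\<^sub>1\<close> and the degree of every other
  node by at most one, which moves that node's \<open>b\<^sub>j\<close> by at most \<open>2/s\<close>. Hence the joint release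
  has squared \<open>\<ell>\<^sub>2\<close>-sensitivity at most \<open>4 (1 + n/s\<^sup>2) r\<^sup>2\<close>, and a Chernoff bound on the
  privacy loss shows that \<open>\<sigma>\<^sup>2 = 32 (1 + n/s\<^sup>2) r\<^sup>2 log(1/\<delta>) / \<epsilon>\<^sup>2\<close> gives \<open>(\<epsilon>, \<delta>)\<close>-privacy.
  Each coordinate of the estimation error is subgaussian with variance proxy \<open>\<sigma>\<^sup>2 a\<^sup>2 / n\<close>, and
  the expected maximum of \<open>k\<close> such variables is at most \<open>\<surd>(2 log(2k) \<sigma>\<^sup>2 a\<^sup>2 / n)\<close>. Since
  \<open>a r \<le> 2 \<gamma>\<^sub>\<eta>(W)\<close> and \<open>log(2k) \<le> 2 log k\<close>, this gives the bound with \<open>C = 32\<close>.\<close>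

section \<open>Gaussian arrays\<close>

lemma PiM_density:
  fixes M :: "'i \<Rightarrow> 'a measure" and f :: "'i \<Rightarrow> 'a \<Rightarrow> ennreal"
  assumes "finite I" and "\<And>i. sigma_finite_measure (M i)"
    and "\<And>i. sigma_finite_measure (density (M i) (f i))"
    and f_meas: "\<And>i. f i \<in> borel_measurable (M i)"
  shows "PiM I (\<lambda>i. density (M i) (f i)) = density (PiM I M) (\<lambda>x. \<Prod>i\<in>I. f i (x i))"
proof -
  interpret D: product_sigma_finite "\<lambda>i. density (M i) (f i)"
    using assms(3) by (simp add: product_sigma_finite_def)
  interpret M: product_sigma_finite M
    using assms(2) by (simp add: product_sigma_finite_def)
  have prod_meas: "(\<lambda>x. \<Prod>i\<in>I. f i (x i)) \<in> borel_measurable (PiM I M)"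
    using f_meas by measurable
  show ?thesis
  proof (rule D.PiM_eqI[symmetric, OF \<open>finite I\<close>])
    show "sets (density (PiM I M) (\<lambda>x. \<Prod>i\<in>I. f i (x i))) = sets (PiM I (\<lambda>i. density (M i) (f i)))"
      by (auto intro!: sets_PiM_cong)
  next
    fix A assume "\<And>i. i \<in> I \<Longrightarrow> A i \<in> sets (density (M i) (f i))"
    then have A: "\<And>i. i \<in> I \<Longrightarrow> A i \<in> sets (M i)" by simp
    have "emeasure (density (PiM I M) (\<lambda>x. \<Prod>i\<in>I. f i (x i))) (PiE I A)
        = (\<integral>\<^sup>+ x. (\<Prod>i\<in>I. f i (x i)) * indicator (PiE I A) x \<partial>PiM I M)"
      using A prod_meas \<open>finite I\<close> by (subst emeasure_density) (auto intro!: sets_PiM_I_finite)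
    also have "\<dots> = (\<integral>\<^sup>+ x. (\<Prod>i\<in>I. f i (x i) * indicator (A i) (x i)) \<partial>PiM I M)"
      by (intro nn_integral_cong)
        (auto simp: space_PiM PiE_def Pi_def prod.distrib indicator_def \<open>finite I\<close>)
    also have "\<dots> = (\<Prod>i\<in>I. \<integral>\<^sup>+ y. f i y * indicator (A i) y \<partial>M i)"
      using \<open>finite I\<close> A f_meas by (subst M.product_nn_integral_prod) auto
    also have "\<dots> = (\<Prod>i\<in>I. emeasure (density (M i) (f i)) (A i))"
      using A f_meas by (intro prod.cong refl) (simp add: emeasure_density)
    finally show "emeasure (density (PiM I M) (\<lambda>x. \<Prod>i\<in>I. f i (x i))) (PiE I A)
        = (\<Prod>i\<in>I. emeasure (density (M i) (f i)) (A i))" .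
  qed
qed

lemma nn_integral_exp_normal_density:
  assumes "0 < \<sigma>"
  shows "(\<integral>\<^sup>+ x. ennreal (exp (c * (x - \<mu>))) \<partial>density lborel (normal_density \<mu> \<sigma>))
         = ennreal (exp (c\<^sup>2 * \<sigma>\<^sup>2 / 2))"
proof -
  interpret N: prob_space "density lborel (normal_density (\<mu> + c * \<sigma>\<^sup>2) \<sigma>)"
    using prob_space_normal_density[OF assms] .
  \<comment> \<open>completing the square shifts the mean by \<open>c \<sigma>\<^sup>2\<close>\<close>
  have shift: "normal_density \<mu> \<sigma> x * exp (c * (x - \<mu>))
      = exp (c\<^sup>2 * \<sigma>\<^sup>2 / 2) * normal_density (\<mu> + c * \<sigma>\<^sup>2) \<sigma> x" for x
  proof -
    have "- (x - \<mu>)\<^sup>2 / (2 * \<sigma>\<^sup>2) + c * (x - \<mu>)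
        = c\<^sup>2 * \<sigma>\<^sup>2 / 2 + - (x - (\<mu> + c * \<sigma>\<^sup>2))\<^sup>2 / (2 * \<sigma>\<^sup>2)"
      using assms by (simp add: field_simps power2_eq_square)
    then show ?thesis
      unfolding normal_density_def by (simp add: exp_add[symmetric])
  qed
  have "(\<integral>\<^sup>+ x. ennreal (exp (c * (x - \<mu>))) \<partial>density lborel (normal_density \<mu> \<sigma>))
      = (\<integral>\<^sup>+ x. ennreal (exp (c\<^sup>2 * \<sigma>\<^sup>2 / 2)) * normal_density (\<mu> + c * \<sigma>\<^sup>2) \<sigma> x \<partial>lborel)"
    by (subst nn_integral_density) (auto simp: ennreal_mult'[symmetric] shift intro!: nn_integral_cong)
  also have "\<dots> = ennreal (exp (c\<^sup>2 * \<sigma>\<^sup>2 / 2))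
      * emeasure (density lborel (normal_density (\<mu> + c * \<sigma>\<^sup>2) \<sigma>)) UNIV"
    by (subst nn_integral_cmult) (auto simp: emeasure_density)
  finally show ?thesis by (simp add: N.emeasure_space_1[simplified])
qed

lemma measurable_PiM_entry:
  assumes "i \<in> I" "t \<in> J"
  shows "(\<lambda>x. x i t) \<in> measurable (PiM I (\<lambda>_. PiM J (\<lambda>_. M))) M"
proof -
  have "(\<lambda>x. x i) \<in> measurable (PiM I (\<lambda>_. PiM J (\<lambda>_. M))) (PiM J (\<lambda>_. M))"
    using assms by measurable
  moreover have "(\<lambda>z. z t) \<in> measurable (PiM J (\<lambda>_. M)) M"
    using assms by measurable
  ultimately show ?thesis
    using measurable_comp[of "\<lambda>x. x i" _ _ "\<lambda>z. z t"] by (simp add: comp_def)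
qed

definition gaussian_vector :: "nat \<Rightarrow> real \<Rightarrow> (nat \<Rightarrow> real) \<Rightarrow> (nat \<Rightarrow> real) measure" where
  "gaussian_vector l \<sigma> m = PiM {..<l} (\<lambda>t. density lborel (normal_density (m t) \<sigma>))"

definition gaussian_array ::
    "nat \<Rightarrow> nat \<Rightarrow> real \<Rightarrow> (nat \<Rightarrow> nat \<Rightarrow> real) \<Rightarrow> (nat \<Rightarrow> nat \<Rightarrow> real) measure" where
  "gaussian_array n l \<sigma> \<mu> = PiM {..<n} (\<lambda>i. gaussian_vector l \<sigma> (\<mu> i))"

definition lborel_array :: "nat \<Rightarrow> nat \<Rightarrow> (nat \<Rightarrow> nat \<Rightarrow> real) measure" where
  "lborel_array n l = PiM {..<n} (\<lambda>_. PiM {..<l} (\<lambda>_. lborel))"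

lemma sets_gaussian_vector: "sets (gaussian_vector l \<sigma> m) = sets (PiM {..<l} (\<lambda>_. borel))"
  unfolding gaussian_vector_def by (intro sets_PiM_cong) auto

lemma sets_gaussian_array: "sets (gaussian_array n l \<sigma> \<mu>) = sets (lborel_array n l)"
  unfolding gaussian_array_def lborel_array_def
  by (intro sets_PiM_cong) (auto simp: sets_gaussian_vector intro!: sets_PiM_cong)

lemma measurable_lborel_array_entry:
  "i \<in> {..<n} \<Longrightarrow> t \<in> {..<l} \<Longrightarrow> (\<lambda>y. y i t) \<in> borel_measurable (lborel_array n l)"
  unfolding lborel_array_def by (rule measurable_PiM_entry[of i _ t _ lborel, simplified]) auto

lemma prob_space_gaussian_vector: "0 < \<sigma> \<Longrightarrow> prob_space (gaussian_vector l \<sigma> m)"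
  unfolding gaussian_vector_def by (intro prob_space_PiM prob_space_normal_density)

lemma prob_space_gaussian_array: "0 < \<sigma> \<Longrightarrow> prob_space (gaussian_array n l \<sigma> \<mu>)"
  unfolding gaussian_array_def by (intro prob_space_PiM prob_space_gaussian_vector)

lemma gaussian_vector_mgf:
  assumes "0 < \<sigma>"
  shows "(\<integral>\<^sup>+ z. ennreal (exp (\<Sum>t<l. c t * (z t - m t))) \<partial>gaussian_vector l \<sigma> m)
       = ennreal (exp (\<Sum>t<l. (c t)\<^sup>2 * \<sigma>\<^sup>2 / 2))"
proof -
  interpret product_sigma_finite "\<lambda>t. density lborel (normal_density (m t) \<sigma>)"
    using prob_space_normal_density[OF assms] prob_space_imp_sigma_finite
    unfolding product_sigma_finite_def by blast
  have "(\<integral>\<^sup>+ z. ennreal (exp (\<Sum>t<l. c t * (z t - m t))) \<partial>gaussian_vector l \<sigma> m)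
      = (\<integral>\<^sup>+ z. (\<Prod>t<l. ennreal (exp (c t * (z t - m t)))) \<partial>gaussian_vector l \<sigma> m)"
    by (simp add: exp_sum prod_ennreal)
  also have "\<dots> = (\<Prod>t<l. \<integral>\<^sup>+ x. ennreal (exp (c t * (x - m t)))
                             \<partial>density lborel (normal_density (m t) \<sigma>))"
    unfolding gaussian_vector_def by (rule product_nn_integral_prod) auto
  also have "\<dots> = ennreal (exp (\<Sum>t<l. (c t)\<^sup>2 * \<sigma>\<^sup>2 / 2))"
    by (simp add: nn_integral_exp_normal_density[OF assms] exp_sum prod_ennreal)
  finally show ?thesis .
qed

lemma gaussian_array_mgf:
  assumes "0 < \<sigma>"
  shows "(\<integral>\<^sup>+ y. ennreal (exp (\<Sum>i<n. \<Sum>t<l. c i t * (y i t - \<mu> i t))) \<partial>gaussian_array n l \<sigma> \<mu>)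
       = ennreal (exp (\<Sum>i<n. \<Sum>t<l. (c i t)\<^sup>2 * \<sigma>\<^sup>2 / 2))"
proof -
  interpret product_sigma_finite "\<lambda>i. gaussian_vector l \<sigma> (\<mu> i)"
    using prob_space_gaussian_vector[OF assms] prob_space_imp_sigma_finite
    unfolding product_sigma_finite_def by blast
  have "(\<integral>\<^sup>+ y. ennreal (exp (\<Sum>i<n. \<Sum>t<l. c i t * (y i t - \<mu> i t))) \<partial>gaussian_array n l \<sigma> \<mu>)
      = (\<integral>\<^sup>+ y. (\<Prod>i<n. ennreal (exp (\<Sum>t<l. c i t * (y i t - \<mu> i t)))) \<partial>gaussian_array n l \<sigma> \<mu>)"
    by (simp add: exp_sum prod_ennreal prod_nonneg)
  also have "\<dots> = (\<Prod>i<n. \<integral>\<^sup>+ z. ennreal (exp (\<Sum>t<l. c i t * (z t - \<mu> i t)))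
                             \<partial>gaussian_vector l \<sigma> (\<mu> i))"
    unfolding gaussian_array_def
    by (rule product_nn_integral_prod) (auto simp: measurable_cong_sets[OF sets_gaussian_vector refl])
  also have "\<dots> = ennreal (exp (\<Sum>i<n. \<Sum>t<l. (c i t)\<^sup>2 * \<sigma>\<^sup>2 / 2))"
    by (simp only: gaussian_vector_mgf[OF assms]) (simp add: exp_sum prod_ennreal prod_nonneg)
  finally show ?thesis .
qed

lemma gaussian_array_density:
  assumes "0 < \<sigma>"
  shows "gaussian_array n l \<sigma> \<mu>
       = density (lborel_array n l) (\<lambda>y. \<Prod>i<n. \<Prod>t<l. normal_density (\<mu> i t) \<sigma> (y i t))"
proof -
  have vector_density: "gaussian_vector l \<sigma> m
      = density (PiM {..<l} (\<lambda>_. lborel)) (\<lambda>z. \<Prod>t<l. ennreal (normal_density (m t) \<sigma> (z t)))" for m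
    unfolding gaussian_vector_def
    by (rule PiM_density[where M = "\<lambda>_. lborel"
          and f = "\<lambda>t x. ennreal (normal_density (m t) \<sigma> x)", simplified])
      (auto intro: lborel.sigma_finite_measure_axioms prob_space_imp_sigma_finite
        prob_space_normal_density assms)
  have "gaussian_array n l \<sigma> \<mu>
      = density (lborel_array n l) (\<lambda>y. \<Prod>i<n. \<Prod>t<l. ennreal (normal_density (\<mu> i t) \<sigma> (y i t)))"
    unfolding gaussian_array_def lborel_array_def vector_density
  proof (rule PiM_density)
    show "sigma_finite_measure (PiM {..<l} (\<lambda>_. lborel :: real measure))"
      by (intro product_sigma_finite.sigma_finite) (auto simp: product_sigma_finite_def
        lborel.sigma_finite_measure_axioms)
    show "sigma_finite_measure (density (PiM {..<l} (\<lambda>_. lborel))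
        (\<lambda>z. \<Prod>t<l. ennreal (normal_density (\<mu> i t) \<sigma> (z t))))" for i
      using prob_space_imp_sigma_finite[OF prob_space_gaussian_vector[OF assms, of l "\<mu> i"]]
      unfolding vector_density .
    show "(\<lambda>z. \<Prod>t<l. ennreal (normal_density (\<mu> i t) \<sigma> (z t)))
        \<in> borel_measurable (PiM {..<l} (\<lambda>_. lborel))" for i
      by measurable
  qed simp
  also have "\<dots> = density (lborel_array n l)
      (\<lambda>y. \<Prod>i<n. \<Prod>t<l. normal_density (\<mu> i t) \<sigma> (y i t))"
  proof -
    note measurable_lborel_array_entry[measurable]
    show ?thesis by (intro density_cong) (measurable, auto simp: prod_ennreal prod_nonneg)
  qed
  finally show ?thesis .
qed

section \<open>Subgaussian variables\<close>

definition subgaussian :: "'a measure \<Rightarrow> ('a \<Rightarrow> real) \<Rightarrow> real \<Rightarrow> bool" where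
  "subgaussian M X v \<longleftrightarrow> X \<in> borel_measurable M \<and>
     (\<forall>c. (\<integral>\<^sup>+ x. ennreal (exp (c * X x)) \<partial>M) \<le> ennreal (exp (c\<^sup>2 * v / 2)))"

lemma subgaussian_gaussian_array_linear:
  assumes "0 < \<sigma>"
  shows "subgaussian (gaussian_array n l \<sigma> \<mu>) (\<lambda>y. \<Sum>i<n. \<Sum>t<l. a i t * (y i t - \<mu> i t))
           (\<sigma>\<^sup>2 * (\<Sum>i<n. \<Sum>t<l. (a i t)\<^sup>2))"
  unfolding subgaussian_def
proof (intro conjI allI)
  note measurable_lborel_array_entry[measurable]
  show "(\<lambda>y. \<Sum>i<n. \<Sum>t<l. a i t * (y i t - \<mu> i t)) \<in> borel_measurable (gaussian_array n l \<sigma> \<mu>)"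
    unfolding measurable_cong_sets[OF sets_gaussian_array refl] by measurable
  fix c
  have "(\<integral>\<^sup>+ y. ennreal (exp (c * (\<Sum>i<n. \<Sum>t<l. a i t * (y i t - \<mu> i t)))) \<partial>gaussian_array n l \<sigma> \<mu>)
      = ennreal (exp (\<Sum>i<n. \<Sum>t<l. (c * a i t)\<^sup>2 * \<sigma>\<^sup>2 / 2))"
    using gaussian_array_mgf[OF assms, where c = "\<lambda>i t. c * a i t"]
    by (simp add: sum_distrib_left mult.assoc)
  also have "(\<Sum>i<n. \<Sum>t<l. (c * a i t)\<^sup>2 * \<sigma>\<^sup>2 / 2) = (\<Sum>i<n. \<Sum>t<l. c\<^sup>2 * \<sigma>\<^sup>2 / 2 * (a i t)\<^sup>2)"
    by (intro sum.cong refl) (simp add: power_mult_distrib)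
  also have "\<dots> = c\<^sup>2 * \<sigma>\<^sup>2 / 2 * (\<Sum>i<n. \<Sum>t<l. (a i t)\<^sup>2)"
    by (simp only: sum_distrib_left)
  also have "\<dots> = c\<^sup>2 * (\<sigma>\<^sup>2 * (\<Sum>i<n. \<Sum>t<l. (a i t)\<^sup>2)) / 2"
    by simp
  finally show "(\<integral>\<^sup>+ y. ennreal (exp (c * (\<Sum>i<n. \<Sum>t<l. a i t * (y i t - \<mu> i t)))) \<partial>gaussian_array n l \<sigma> \<mu>)
      \<le> ennreal (exp (c\<^sup>2 * (\<sigma>\<^sup>2 * (\<Sum>i<n. \<Sum>t<l. (a i t)\<^sup>2)) / 2))" by simp
qed

lemma subgaussian_mono: "subgaussian M X v \<Longrightarrow> v \<le> w \<Longrightarrow> subgaussian M X w"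
  unfolding subgaussian_def by (auto intro: order.trans intro!: ennreal_leI mult_left_mono divide_right_mono)

lemma emeasure_subgaussian_ge_le:
  assumes "subgaussian M X v" and "0 < c"
  shows "emeasure M {x \<in> space M. a \<le> X x} \<le> ennreal (exp (c\<^sup>2 * v / 2 - c * a))"
proof -
  have X_meas [measurable]: "X \<in> borel_measurable M" and
    mgf: "(\<integral>\<^sup>+ x. ennreal (exp (c * X x)) \<partial>M) \<le> ennreal (exp (c\<^sup>2 * v / 2))"
    using assms(1) unfolding subgaussian_def by auto
  have "emeasure M {x \<in> space M. a \<le> X x}
      \<le> ennreal (exp (- c * a)) * (\<integral>\<^sup>+ x. ennreal (exp (c * X x)) * indicator (space M) x \<partial>M)"
    by (rule Chernoff_ineq_nn_integral_ge) (use \<open>0 < c\<close> in auto)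
  also have "(\<integral>\<^sup>+ x. ennreal (exp (c * X x)) * indicator (space M) x \<partial>M)
      = (\<integral>\<^sup>+ x. ennreal (exp (c * X x)) \<partial>M)"
    by (intro nn_integral_cong) simp
  also have "ennreal (exp (- c * a)) * \<dots> \<le> ennreal (exp (- c * a)) * ennreal (exp (c\<^sup>2 * v / 2))"
    by (intro mult_left_mono mgf) simp
  also have "\<dots> = ennreal (exp (c\<^sup>2 * v / 2 - c * a))"
    by (simp add: ennreal_mult'[symmetric] exp_add[symmetric])
  finally show ?thesis .
qed

lemma Max_abs_le_log_sum_exp:
  fixes z :: "nat \<Rightarrow> real"
  assumes k: "0 < k" and c: "0 < c" and B: "0 < B"
  shows "Max {\<bar>z j\<bar> | j. j < k} \<le> (ln B - 1) / c + (\<Sum>j<k. exp (c * z j) + exp (- c * z j)) / (c * B)"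
proof -
  define S where "S = (\<Sum>j<k. exp (c * z j) + exp (- c * z j))"
  have S: "0 < S"
    unfolding S_def by (intro sum_pos) (use k in \<open>auto intro: add_pos_pos simp: lessThan_empty_iff\<close>)
  have "c * \<bar>z j\<bar> \<le> ln S" if "j < k" for j
  proof -
    have "exp (c * \<bar>z j\<bar>) \<le> exp (c * z j) + exp (- c * z j)"
      by (cases "0 \<le> z j") auto
    also have "\<dots> \<le> S"
      unfolding S_def using that
      by (intro member_le_sum[where f = "\<lambda>j. exp (c * z j) + exp (- c * z j)"])
        (auto intro: add_nonneg_nonneg)
    finally show ?thesis using S by (simp add: ln_ge_iff)
  qed
  then have "Max {\<bar>z j\<bar> | j. j < k} \<le> ln S / c"
    using k c by (intro Max.boundedI) (auto simp: field_simps intro!: exI[of _ 0])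
  \<comment> \<open>\<open>ln y \<le> y - 1\<close> at \<open>y = S / B\<close>\<close>
  also have "ln S \<le> ln B - 1 + S / B"
    using ln_le_minus_one[of "S / B"] S B by (simp add: ln_div)
  then have "ln S / c \<le> (ln B - 1 + S / B) / c"
    using c by (simp add: divide_right_mono)
  finally show ?thesis unfolding S_def[symmetric] by (simp add: add_divide_distrib mult.commute)
qed

lemma (in prob_space) nn_integral_sum_exp_subgaussian_le:
  fixes k :: nat
  assumes Z: "\<And>j. j < k \<Longrightarrow> subgaussian M (Z j) v"
  shows "(\<integral>\<^sup>+ x. ennreal (\<Sum>j<k. exp (c * Z j x) + exp (- c * Z j x)) \<partial>M)
    \<le> ennreal (2 * real k * exp (c\<^sup>2 * v / 2))"
proof -
  have [measurable]: "Z j \<in> borel_measurable M" if "j \<in> {..<k}" for j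
    using Z that by (simp add: subgaussian_def)
  have "(\<integral>\<^sup>+ x. ennreal (\<Sum>j<k. exp (c * Z j x) + exp (- c * Z j x)) \<partial>M)
      = (\<integral>\<^sup>+ x. (\<Sum>j<k. ennreal (exp (c * Z j x)) + ennreal (exp (- c * Z j x))) \<partial>M)"
    by (intro nn_integral_cong) (simp add: sum_ennreal[symmetric] ennreal_plus del: sum_ennreal)
  also have "\<dots> = (\<Sum>j<k. (\<integral>\<^sup>+ x. ennreal (exp (c * Z j x)) \<partial>M) + (\<integral>\<^sup>+ x. ennreal (exp (- c * Z j x)) \<partial>M))"
    by (subst nn_integral_sum) (auto intro!: sum.cong nn_integral_add)
  also have "\<dots> \<le> (\<Sum>j<k. ennreal (exp (c\<^sup>2 * v / 2)) + ennreal (exp ((- c)\<^sup>2 * v / 2)))"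
  proof (intro sum_mono add_mono)
    fix j assume "j \<in> {..<k}"
    then have "\<And>d. (\<integral>\<^sup>+ x. ennreal (exp (d * Z j x)) \<partial>M) \<le> ennreal (exp (d\<^sup>2 * v / 2))"
      using Z unfolding subgaussian_def by blast
    from this[of c] this[of "- c"]
    show "(\<integral>\<^sup>+ x. ennreal (exp (c * Z j x)) \<partial>M) \<le> ennreal (exp (c\<^sup>2 * v / 2))"
      "(\<integral>\<^sup>+ x. ennreal (exp (- c * Z j x)) \<partial>M) \<le> ennreal (exp ((- c)\<^sup>2 * v / 2))" .
  qed
  also have "\<dots> = ennreal (2 * real k * exp (c\<^sup>2 * v / 2))"
    by (simp add: ennreal_plus[symmetric] ennreal_of_nat_eq_real_of_nat
      ennreal_mult[symmetric] del: ennreal_plus)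
  finally show ?thesis .
qed

lemma (in prob_space) nn_integral_Max_abs_subgaussian_le_param:
  fixes k :: nat
  assumes k: "2 \<le> k" and c: "0 < c" and v: "0 \<le> v"
    and Z: "\<And>j. j < k \<Longrightarrow> subgaussian M (Z j) v"
  shows "(\<integral>\<^sup>+ x. ennreal (Max {\<bar>Z j x\<bar> | j. j < k}) \<partial>M) \<le> ennreal ((ln (2 * real k) + c\<^sup>2 * v / 2) / c)"
proof -
  define B where "B = 2 * real k * exp (c\<^sup>2 * v / 2)"
  define S where "S x = (\<Sum>j<k. exp (c * Z j x) + exp (- c * Z j x))" for x
  have B: "0 < B" "ln B = ln (2 * real k) + c\<^sup>2 * v / 2"
    unfolding B_def using k by (simp_all add: ln_mult)
  have ln_B: "1 \<le> ln B"
  proof -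
    have "ln (4::real) = 2 * ln 2" using ln_realpow[of 2 2] by simp
    moreover have "ln 4 \<le> ln (2 * real k)" using k by simp
    moreover have "0 \<le> c\<^sup>2 * v / 2" using v by simp
    ultimately show ?thesis unfolding B using ln2_ge_two_thirds by linarith
  qed
  have [measurable]: "Z j \<in> borel_measurable M" if "j \<in> {..<k}" for j
    using Z that by (simp add: subgaussian_def)
  have "(\<integral>\<^sup>+ x. ennreal (Max {\<bar>Z j x\<bar> | j. j < k}) \<partial>M)
      \<le> (\<integral>\<^sup>+ x. ennreal ((ln B - 1) / c) + ennreal (1 / (c * B)) * ennreal (S x) \<partial>M)"
  proof (rule nn_integral_mono)
    fix x
    have "0 < S x"
      unfolding S_def by (intro sum_pos) (use k in \<open>auto intro: add_pos_pos simp: lessThan_empty_iff\<close>)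
    have "ennreal (Max {\<bar>Z j x\<bar> | j. j < k}) \<le> ennreal ((ln B - 1) / c + 1 / (c * B) * S x)"
      using Max_abs_le_log_sum_exp[of k c B "\<lambda>j. Z j x"] k c B(1) unfolding S_def by (intro ennreal_leI) simp
    also have "\<dots> = ennreal ((ln B - 1) / c) + ennreal (1 / (c * B)) * ennreal (S x)"
      using ln_B c B(1) \<open>0 < S x\<close> by (simp add: ennreal_plus ennreal_mult[symmetric])
    finally show "ennreal (Max {\<bar>Z j x\<bar> | j. j < k})
        \<le> ennreal ((ln B - 1) / c) + ennreal (1 / (c * B)) * ennreal (S x)" .
  qed
  also have "\<dots> = ennreal ((ln B - 1) / c) + ennreal (1 / (c * B)) * (\<integral>\<^sup>+ x. ennreal (S x) \<partial>M)"
    unfolding S_def by (simp add: nn_integral_add nn_integral_cmult emeasure_space_1)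
  also have "\<dots> \<le> ennreal ((ln B - 1) / c) + ennreal (1 / (c * B)) * ennreal B"
    unfolding S_def B_def by (intro add_left_mono mult_left_mono nn_integral_sum_exp_subgaussian_le Z) simp_all
  also have "\<dots> = ennreal (ln B / c)"
    using c B(1) ln_B by (simp add: ennreal_plus[symmetric] ennreal_mult[symmetric] field_simps
      del: ennreal_plus)
  finally show ?thesis unfolding B(2) .
qed

lemma (in prob_space) nn_integral_Max_abs_subgaussian_le:
  fixes k :: nat
  assumes k: "2 \<le> k" and v: "0 \<le> v" and Z: "\<And>j. j < k \<Longrightarrow> subgaussian M (Z j) v"
  shows "(\<integral>\<^sup>+ x. ennreal (Max {\<bar>Z j x\<bar> | j. j < k}) \<partial>M) \<le> ennreal (sqrt (2 * ln (2 * real k) * v))"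
proof -
  define A where "A = ln (2 * real k)"
  have A: "0 < A" unfolding A_def using k by simp
  show ?thesis
  proof (cases "v = 0")
    case True
    show ?thesis
    proof (rule ennreal_le_epsilon)
      fix e :: real assume "0 < e"
      then have c: "0 < A / e" using A by simp
      have "(\<integral>\<^sup>+ x. ennreal (Max {\<bar>Z j x\<bar> | j. j < k}) \<partial>M)
          \<le> ennreal ((ln (2 * real k) + (A / e)\<^sup>2 * v / 2) / (A / e))"
        by (rule nn_integral_Max_abs_subgaussian_le_param[OF k c v Z])
      also have "\<dots> = ennreal e" using True A \<open>0 < e\<close> unfolding A_def by simp
      finally show "(\<integral>\<^sup>+ x. ennreal (Max {\<bar>Z j x\<bar> | j. j < k}) \<partial>M)
          \<le> ennreal (sqrt (2 * ln (2 * real k) * v)) + ennreal e"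
        using True by simp
    qed
  next
    case False
    then have "0 < v" using v by simp
    \<comment> \<open>the minimiser of \<open>(A + c\<^sup>2 v / 2) / c\<close>\<close>
    define c where "c = sqrt (2 * A / v)"
    have c: "0 < c" and c2: "c\<^sup>2 = 2 * A / v"
      unfolding c_def using A \<open>0 < v\<close> by simp_all
    have "(\<integral>\<^sup>+ x. ennreal (Max {\<bar>Z j x\<bar> | j. j < k}) \<partial>M) \<le> ennreal ((A + c\<^sup>2 * v / 2) / c)"
      unfolding A_def by (rule nn_integral_Max_abs_subgaussian_le_param[OF k c v Z])
    also have "(A + c\<^sup>2 * v / 2) / c = sqrt (2 * A * v)"
    proof (rule real_sqrt_unique[symmetric])
      have "A + c\<^sup>2 * v / 2 = 2 * A" using \<open>0 < v\<close> by (simp add: c2)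
      then show "((A + c\<^sup>2 * v / 2) / c)\<^sup>2 = 2 * A * v"
        using A \<open>0 < v\<close> by (simp add: power_divide c2) (simp add: field_simps power2_eq_square)
      show "0 \<le> (A + c\<^sup>2 * v / 2) / c" using A c v by simp
    qed
    finally show ?thesis unfolding A_def .
  qed
qed

lemma measurable_Max_lessThan:
  fixes f :: "nat \<Rightarrow> 'a \<Rightarrow> real"
  assumes "\<And>i. i < k \<Longrightarrow> f i \<in> borel_measurable M"
  shows "(\<lambda>x. Max {f i x | i. i < k}) \<in> borel_measurable M"
proof -
  have "(\<lambda>x. Max ((\<lambda>i. f i x) ` {..<k})) \<in> borel_measurable M"
    using assms by (intro borel_measurable_Max) auto
  moreover have "{f i x | i. i < k} = (\<lambda>i. f i x) ` {..<k}" for x by auto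
  ultimately show ?thesis by simp
qed

lemma (in prob_space) nn_integral_le_plus_Max_abs_subgaussian:
  fixes k :: nat
  assumes k: "2 \<le> k" and v: "0 \<le> v" and \<eta>: "0 \<le> \<eta>"
    and Z: "\<And>j. j < k \<Longrightarrow> subgaussian M (Z j) v"
    and F: "\<And>x. x \<in> space M \<Longrightarrow> F x \<le> \<eta> + Max {\<bar>Z j x\<bar> | j. j < k}"
  shows "(\<integral>\<^sup>+ x. ennreal (F x) \<partial>M) \<le> ennreal (\<eta> + sqrt (2 * ln (2 * real k) * v))"
proof -
  have Max_meas: "(\<lambda>x. Max {\<bar>Z j x\<bar> | j. j < k}) \<in> borel_measurable M"
    using Z by (intro measurable_Max_lessThan borel_measurable_abs) (auto simp: subgaussian_def)
  have "0 \<le> Max {\<bar>Z j x\<bar> | j. j < k}" for x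
  proof -
    have "\<bar>Z 0 x\<bar> \<le> Max {\<bar>Z j x\<bar> | j. j < k}" using k by (intro Max_ge) auto
    then show ?thesis by linarith
  qed
  then have "(\<integral>\<^sup>+ x. ennreal (F x) \<partial>M)
      \<le> (\<integral>\<^sup>+ x. ennreal \<eta> + ennreal (Max {\<bar>Z j x\<bar> | j. j < k}) \<partial>M)"
    using F \<eta> by (intro nn_integral_mono) (simp add: ennreal_plus[symmetric] ennreal_leI del: ennreal_plus)
  also have "\<dots> = ennreal \<eta> + (\<integral>\<^sup>+ x. ennreal (Max {\<bar>Z j x\<bar> | j. j < k}) \<partial>M)"
    using Max_meas by (simp add: nn_integral_add emeasure_space_1)
  also have "\<dots> \<le> ennreal \<eta> + ennreal (sqrt (2 * ln (2 * real k) * v))"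
    using nn_integral_Max_abs_subgaussian_le[OF k v Z] by (rule add_left_mono)
  also have "\<dots> = ennreal (\<eta> + sqrt (2 * ln (2 * real k) * v))"
    using \<eta> k v by (intro ennreal_plus[symmetric]) auto
  finally show ?thesis .
qed

section \<open>Privacy of the Gaussian mechanism\<close>

lemma measure_density_le_exp_mult_plus:
  fixes p q :: "'a \<Rightarrow> ennreal"
  assumes "prob_space (density M p)" "prob_space (density M q)"
    and [measurable]: "p \<in> borel_measurable M" "q \<in> borel_measurable M" "Y \<in> sets M"
    and tail: "emeasure (density M p) {y \<in> space M. ennreal (exp \<epsilon>) * q y < p y} \<le> \<delta>"
    and "0 \<le> \<delta>"
  shows "measure (density M p) Y \<le> exp \<epsilon> * measure (density M q) Y + \<delta>"
proof -
  interpret P: prob_space "density M p" by fact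
  interpret Q: prob_space "density M q" by fact
  let ?T = "{y \<in> space M. ennreal (exp \<epsilon>) * q y < p y}"
  have [measurable]: "?T \<in> sets M" by measurable
  have "emeasure (density M p) Y = (\<integral>\<^sup>+ y. p y * indicator Y y \<partial>M)"
    by (simp add: emeasure_density)
  also have "\<dots> \<le> (\<integral>\<^sup>+ y. ennreal (exp \<epsilon>) * (q y * indicator Y y) + p y * indicator ?T y \<partial>M)"
  proof (rule nn_integral_mono)
    fix y assume "y \<in> space M"
    then show "p y * indicator Y y \<le> ennreal (exp \<epsilon>) * (q y * indicator Y y) + p y * indicator ?T y"
      by (cases "ennreal (exp \<epsilon>) * q y < p y") (auto simp: indicator_def not_less add_increasing2)
  qed
  also have "\<dots> = ennreal (exp \<epsilon>) * emeasure (density M q) Y + emeasure (density M p) ?T"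
    by (simp add: nn_integral_add nn_integral_cmult emeasure_density)
  also have "\<dots> \<le> ennreal (exp \<epsilon>) * emeasure (density M q) Y + \<delta>"
    using tail by (rule add_left_mono)
  finally show ?thesis
    using \<open>0 \<le> \<delta>\<close> by (simp add: P.emeasure_eq_measure Q.emeasure_eq_measure ennreal_mult'[symmetric]
      ennreal_plus[symmetric] del: ennreal_plus)
qed

lemma normal_density_ratio:
  assumes "0 < \<sigma>"
  shows "normal_density m \<sigma> x
       = exp ((m - m') * (x - m) / \<sigma>\<^sup>2 + (m - m')\<^sup>2 / (2 * \<sigma>\<^sup>2)) * normal_density m' \<sigma> x"
proof -
  have "- (x - m)\<^sup>2 / (2 * \<sigma>\<^sup>2)
      = (m - m') * (x - m) / \<sigma>\<^sup>2 + (m - m')\<^sup>2 / (2 * \<sigma>\<^sup>2) + - (x - m')\<^sup>2 / (2 * \<sigma>\<^sup>2)"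
    using assms by (simp add: field_simps power2_eq_square)
  then show ?thesis
    unfolding normal_density_def by (simp add: exp_add[symmetric])
qed

lemma prod_normal_density_ratio:
  fixes \<mu> \<mu>' y :: "nat \<Rightarrow> nat \<Rightarrow> real"
  assumes "0 < \<sigma>"
  shows "(\<Prod>i<n. \<Prod>t<l. normal_density (\<mu> i t) \<sigma> (y i t))
    = exp ((\<Sum>i<n. \<Sum>t<l. (\<mu> i t - \<mu>' i t) / \<sigma>\<^sup>2 * (y i t - \<mu> i t))
        + (\<Sum>i<n. \<Sum>t<l. (\<mu> i t - \<mu>' i t)\<^sup>2) / \<sigma>\<^sup>2 / 2)
      * (\<Prod>i<n. \<Prod>t<l. normal_density (\<mu>' i t) \<sigma> (y i t))"
proof -
  let ?e = "\<lambda>i t. (\<mu> i t - \<mu>' i t) * (y i t - \<mu> i t) / \<sigma>\<^sup>2 + (\<mu> i t - \<mu>' i t)\<^sup>2 / (2 * \<sigma>\<^sup>2)"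
  have "(\<Prod>i<n. \<Prod>t<l. normal_density (\<mu> i t) \<sigma> (y i t))
      = (\<Prod>i<n. \<Prod>t<l. exp (?e i t) * normal_density (\<mu>' i t) \<sigma> (y i t))"
    by (intro prod.cong refl normal_density_ratio[OF assms])
  also have "\<dots> = (\<Prod>i<n. \<Prod>t<l. exp (?e i t)) * (\<Prod>i<n. \<Prod>t<l. normal_density (\<mu>' i t) \<sigma> (y i t))"
    by (simp add: prod.distrib)
  also have "(\<Sum>i<n. \<Sum>t<l. (\<mu> i t - \<mu>' i t) / \<sigma>\<^sup>2 * (y i t - \<mu> i t))
      + (\<Sum>i<n. \<Sum>t<l. (\<mu> i t - \<mu>' i t)\<^sup>2) / \<sigma>\<^sup>2 / 2 = (\<Sum>i<n. \<Sum>t<l. ?e i t)"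
    unfolding sum.distrib by (simp add: sum_divide_distrib mult.commute[of 2])
  then have "(\<Prod>i<n. \<Prod>t<l. exp (?e i t)) = exp ((\<Sum>i<n. \<Sum>t<l. (\<mu> i t - \<mu>' i t) / \<sigma>\<^sup>2 * (y i t - \<mu> i t))
      + (\<Sum>i<n. \<Sum>t<l. (\<mu> i t - \<mu>' i t)\<^sup>2) / \<sigma>\<^sup>2 / 2)"
    by (simp add: exp_sum)
  finally show ?thesis .
qed

text \<open>The privacy loss of the Gaussian mechanism is subgaussian with mean \<open>v / 2\<close> and variance
  proxy \<open>v\<close>; its tail beyond \<open>\<epsilon>\<close> is controlled by a Chernoff bound at \<open>c = 2 log(1/\<delta>) / \<epsilon>\<close>.\<close>

lemma emeasure_privacy_loss_tail_le:
  assumes X: "subgaussian M X v" and v: "0 \<le> v" "v \<le> \<epsilon>\<^sup>2 / (8 * ln (1/\<delta>))"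
    and \<epsilon>: "0 < \<epsilon>" "\<epsilon> \<le> 1" and \<delta>: "0 < \<delta>" "\<delta> \<le> 1/2"
  shows "emeasure M {x \<in> space M. \<epsilon> - v / 2 \<le> X x} \<le> \<delta>"
proof -
  define L where "L = ln (1/\<delta>)"
  define c where "c = 2 * L / \<epsilon>"
  have "ln 2 \<le> L"
    unfolding L_def using \<delta> by (subst ln_le_cancel_iff) (auto simp: field_simps)
  then have L: "2/3 \<le> L" using ln2_ge_two_thirds by linarith
  have c: "0 < c" unfolding c_def using \<epsilon> L by simp
  have "emeasure M {x \<in> space M. \<epsilon> - v / 2 \<le> X x} \<le> ennreal (exp (c\<^sup>2 * v / 2 - c * (\<epsilon> - v / 2)))"
    by (rule emeasure_subgaussian_ge_le[OF X c])
  also have "\<dots> \<le> ennreal (exp (- L))"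
  proof (intro ennreal_leI exp_mono)
    have Lv: "L * v \<le> \<epsilon>\<^sup>2 / 8" using v L by (simp add: L_def field_simps)
    have "c\<^sup>2 * v / 2 = 2 * L * (L * v) / \<epsilon>\<^sup>2" "c * v / 2 = L * v / \<epsilon>" "c * \<epsilon> = 2 * L"
      unfolding c_def using \<epsilon> by (simp_all add: field_simps power2_eq_square)
    moreover have "2 * L * (L * v) / \<epsilon>\<^sup>2 \<le> L / 4" "L * v / \<epsilon> \<le> \<epsilon> / 8"
      using Lv \<epsilon> L by (simp_all add: field_simps power2_eq_square)
    moreover have "c * (\<epsilon> - v / 2) = c * \<epsilon> - c * v / 2"
      by (simp add: right_diff_distrib)
    ultimately show "c\<^sup>2 * v / 2 - c * (\<epsilon> - v / 2) \<le> - L"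
      using \<epsilon> L by linarith
  qed
  also have "\<dots> = \<delta>" unfolding L_def using \<delta> by (simp add: ln_div)
  finally show ?thesis .
qed

lemma measure_gaussian_array_le:
  fixes \<mu> \<mu>' :: "nat \<Rightarrow> nat \<Rightarrow> real"
  assumes \<sigma>: "0 < \<sigma>" and \<epsilon>: "0 < \<epsilon>" "\<epsilon> \<le> 1" and \<delta>: "0 < \<delta>" "\<delta> \<le> 1/2"
    and dist: "(\<Sum>i<n. \<Sum>t<l. (\<mu> i t - \<mu>' i t)\<^sup>2) \<le> \<sigma>\<^sup>2 * \<epsilon>\<^sup>2 / (8 * ln (1/\<delta>))"
    and Y: "Y \<in> sets (gaussian_array n l \<sigma> \<mu>)"
  shows "measure (gaussian_array n l \<sigma> \<mu>) Y \<le> exp \<epsilon> * measure (gaussian_array n l \<sigma> \<mu>') Y + \<delta>"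
proof -
  let ?P = "gaussian_array n l \<sigma> \<mu>"
  define v where "v = (\<Sum>i<n. \<Sum>t<l. (\<mu> i t - \<mu>' i t)\<^sup>2) / \<sigma>\<^sup>2"
  define X where "X y = (\<Sum>i<n. \<Sum>t<l. (\<mu> i t - \<mu>' i t) / \<sigma>\<^sup>2 * (y i t - \<mu> i t))"
    for y :: "nat \<Rightarrow> nat \<Rightarrow> real"
  define p where "p y = (\<Prod>i<n. \<Prod>t<l. normal_density (\<mu> i t) \<sigma> (y i t))"
    for y :: "nat \<Rightarrow> nat \<Rightarrow> real"
  define q where "q y = (\<Prod>i<n. \<Prod>t<l. normal_density (\<mu>' i t) \<sigma> (y i t))"
    for y :: "nat \<Rightarrow> nat \<Rightarrow> real"
  have "subgaussian ?P X (\<sigma>\<^sup>2 * (\<Sum>i<n. \<Sum>t<l. ((\<mu> i t - \<mu>' i t) / \<sigma>\<^sup>2)\<^sup>2))"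
    unfolding X_def by (rule subgaussian_gaussian_array_linear[OF \<sigma>])
  also have "\<sigma>\<^sup>2 * (\<Sum>i<n. \<Sum>t<l. ((\<mu> i t - \<mu>' i t) / \<sigma>\<^sup>2)\<^sup>2) = v"
    unfolding v_def using \<sigma> by (simp add: power_divide sum_divide_distrib[symmetric] power2_eq_square)
  finally have X: "subgaussian ?P X v" .
  have v: "0 \<le> v" "v \<le> \<epsilon>\<^sup>2 / (8 * ln (1/\<delta>))"
    using dist \<sigma> unfolding v_def by (auto simp: field_simps sum_nonneg)
  have "{y \<in> space (lborel_array n l). ennreal (exp \<epsilon>) * q y < p y} \<subseteq> {y \<in> space ?P. \<epsilon> - v / 2 \<le> X y}"
  proof safe
    fix y assume "ennreal (exp \<epsilon>) * ennreal (q y) < ennreal (p y)"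
    then have "exp \<epsilon> * q y < exp (X y + v / 2) * q y"
      using prod_normal_density_ratio[OF \<sigma>, where n = n and l = l and \<mu> = \<mu> and \<mu>' = \<mu>' and y = y] unfolding p_def q_def X_def v_def
      by (simp add: ennreal_mult'[symmetric] prod_nonneg ennreal_less_iff)
    then have "exp \<epsilon> < exp (X y + v / 2)"
      by (rule mult_right_less_imp_less) (simp add: q_def prod_nonneg)
    then show "\<epsilon> - v / 2 \<le> X y" by simp
  qed (use sets_eq_imp_space_eq[OF sets_gaussian_array] in auto)
  then have "emeasure ?P {y \<in> space (lborel_array n l). ennreal (exp \<epsilon>) * q y < p y}
      \<le> emeasure ?P {y \<in> space ?P. \<epsilon> - v / 2 \<le> X y}"
    using X unfolding subgaussian_def by (intro emeasure_mono) auto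
  then have tail: "emeasure ?P {y \<in> space (lborel_array n l). ennreal (exp \<epsilon>) * q y < p y} \<le> \<delta>"
    using emeasure_privacy_loss_tail_le[OF X v \<epsilon> \<delta>] by (rule order.trans)
  note measurable_lborel_array_entry[measurable]
  show ?thesis
    using prob_space_gaussian_array[OF \<sigma>, of n l \<mu>] prob_space_gaussian_array[OF \<sigma>, of n l \<mu>'] Y tail \<delta>
    unfolding gaussian_array_density[OF \<sigma>] p_def[symmetric] q_def[symmetric] sets_density
    by (intro measure_density_le_exp_mult_plus) (auto simp: p_def q_def)
qed

section \<open>Blurry degree distributions\<close>

lemma blur_prob_eq:
  assumes "0 < s"
  shows "blur_prob s d j = (if j = d div s then 1 - real (d mod s) / s else 0)
                         + (if j = d div s + 1 then real (d mod s) / s else 0)"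
proof -
  have floor: "\<lfloor>real d / real s\<rfloor> = int (d div s)"
    by (rule floor_divide_of_nat_eq)
  have "real d = real s * real (d div s) + real (d mod s)"
    by (metis of_nat_add of_nat_mult mult_div_mod_eq)
  then have "real d / real s - real (d div s) = real (d mod s) / real s"
    using assms by (simp add: field_simps)
  then show ?thesis
    unfolding blur_prob_def Let_def floor by simp
qed

lemma blur_prob_nonneg: "0 < s \<Longrightarrow> 0 \<le> blur_prob s d j"
  by (simp add: blur_prob_eq)

lemma sum_blur_prob_le: "0 < s \<Longrightarrow> (\<Sum>j<\<nu>. blur_prob s d j) \<le> 1"
  by (simp add: blur_prob_eq sum.distrib)

lemma blur_prob_diff_Suc:
  assumes "0 < s"
  shows "blur_prob s d j - blur_prob s (Suc d) j
       = (if j = d div s then 1 / s else 0) - (if j = d div s + 1 then 1 / s else 0)"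
proof (cases "Suc (d mod s) < s")
  case True
  then have "Suc d div s = d div s" "Suc d mod s = Suc (d mod s)"
    by (simp_all add: div_Suc mod_Suc)
  then show ?thesis
    unfolding blur_prob_eq[OF assms] by (simp add: add_divide_distrib)
next
  case False
  then have "Suc (d mod s) = s"
    using mod_less_divisor[OF assms, of d] by linarith
  then have "Suc d div s = d div s + 1" "Suc d mod s = 0" "real (d mod s) / s = 1 - 1 / s"
    using assms by (auto simp: div_Suc mod_Suc field_simps)
  then show ?thesis
    unfolding blur_prob_eq[OF assms] by simp
qed

lemma sum_abs_blur_prob_diff_le_adjacent:
  assumes "0 < s" and "d \<le> Suc d'" and "d' \<le> Suc d"
  shows "(\<Sum>j<\<nu>. \<bar>blur_prob s d j - blur_prob s d' j\<bar>) \<le> 2 / s"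
proof -
  have Suc_le: "(\<Sum>j<\<nu>. \<bar>blur_prob s e j - blur_prob s (Suc e) j\<bar>) \<le> 2 / s" for e
  proof -
    have "(\<Sum>j<\<nu>. \<bar>blur_prob s e j - blur_prob s (Suc e) j\<bar>)
        \<le> (\<Sum>j<\<nu>. (if j = e div s then 1 / s else 0) + (if j = e div s + 1 then 1 / s else 0))"
      unfolding blur_prob_diff_Suc[OF assms(1)] by (intro sum_mono) auto
    also have "\<dots> \<le> 1 / s + 1 / s"
      unfolding sum.distrib by (intro add_mono) auto
    finally show ?thesis by simp
  qed
  consider "d' = d" | "d' = Suc d" | "d = Suc d'"
    using assms(2,3) by linarith
  then show ?thesis
    by cases (use Suc_le[of d] Suc_le[of d'] in \<open>simp_all add: abs_minus_commute\<close>)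
qed

lemma sum_abs_blur_prob_diff_le:
  assumes "0 < s"
  shows "(\<Sum>j<\<nu>. \<bar>blur_prob s d j - blur_prob s d' j\<bar>) \<le> 2"
proof -
  have "(\<Sum>j<\<nu>. \<bar>blur_prob s d j - blur_prob s d' j\<bar>) \<le> (\<Sum>j<\<nu>. blur_prob s d j + blur_prob s d' j)"
    using blur_prob_nonneg[OF assms] by (intro sum_mono) (simp add: abs_le_iff)
  also have "\<dots> \<le> 2"
    using sum_blur_prob_le[OF assms, where \<nu> = \<nu> and d = d]
      sum_blur_prob_le[OF assms, where \<nu> = \<nu> and d = d']
    by (simp add: sum.distrib)
  finally show ?thesis .
qed

lemma nbhd_subset:
  assumes "simple_graph n G"
  shows "nbhd G i \<subseteq> {..<n} - {i}"
proof
  fix j assume "j \<in> nbhd G i"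
  then have "{i, j} \<in> G" "j \<noteq> i" by (auto simp: nbhd_def)
  with assms obtain a b where "a < n" "b < n" "{i, j} = {a, b}"
    unfolding simple_graph_def by blast
  with \<open>j \<noteq> i\<close> show "j \<in> {..<n} - {i}" by (auto simp: doubleton_eq_iff)
qed

lemma deg_less:
  assumes "simple_graph n G" and "i < n"
  shows "deg G i < n"
proof -
  have "deg G i \<le> card ({..<n} - {i})"
    unfolding deg_def by (rule card_mono[OF _ nbhd_subset[OF assms(1)]]) simp
  also have "\<dots> < n" using assms(2) by simp
  finally show ?thesis .
qed

lemma deg_le_Suc_deg_of_node_neighbor:
  assumes "\<forall>e. v \<notin> e \<longrightarrow> (e \<in> G \<longleftrightarrow> e \<in> G')" and "i \<noteq> v"
  shows "deg G i \<le> Suc (deg G' i)"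
proof -
  have eq: "nbhd G i - {v} = nbhd G' i - {v}"
    using assms unfolding nbhd_def by (auto simp: insert_commute)
  have "card (nbhd G i) \<le> Suc (card (nbhd G i - {v}))"
    by (auto simp: card_Diff_singleton_if)
  also have "card (nbhd G i - {v}) \<le> card (nbhd G' i)"
    unfolding eq by (simp add: card_Diff_singleton_if)
  finally show ?thesis unfolding deg_def by simp
qed

lemma blurry_deg_dist_eq:
  assumes "simple_graph n G" and "0 < n"
  shows "blurry_deg_dist n s G j = (\<Sum>i<n. blur_prob s (deg G i) j) / n"
proof -
  have "(\<Sum>i<n. blur_prob s (deg G i) j)
      = (\<Sum>d<n. \<Sum>i | i \<in> {..<n} \<and> deg G i = d. blur_prob s (deg G i) j)"
    using deg_less[OF assms(1)] by (subst sum.group[symmetric, where g = "deg G"]) auto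
  also have "\<dots> = (\<Sum>d<n. real (card {i. i < n \<and> deg G i = d}) * blur_prob s d j)"
    by (intro sum.cong refl) simp
  finally show ?thesis
    unfolding blurry_deg_dist_def degree_distribution_def by (simp add: sum_divide_distrib)
qed

lemma blurry_deg_dist_nonneg:
  "simple_graph n G \<Longrightarrow> 0 < n \<Longrightarrow> 0 < s \<Longrightarrow> 0 \<le> blurry_deg_dist n s G j"
  by (simp add: blurry_deg_dist_eq blur_prob_nonneg sum_nonneg)

lemma sum_blurry_deg_dist_le:
  assumes "simple_graph n G" and "0 < n" and "0 < s"
  shows "(\<Sum>j<\<nu>. blurry_deg_dist n s G j) \<le> 1"
proof -
  have "(\<Sum>j<\<nu>. blurry_deg_dist n s G j) = (\<Sum>i<n. \<Sum>j<\<nu>. blur_prob s (deg G i) j) / n"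
    unfolding blurry_deg_dist_eq[OF assms(1,2)]
    by (simp add: sum_divide_distrib[symmetric] sum.swap[of _ "{..<\<nu>}"])
  also have "\<dots> \<le> (\<Sum>i<n. 1) / n"
    using sum_blur_prob_le[OF assms(3)] by (intro divide_right_mono sum_mono) auto
  also have "\<dots> = 1" using assms(2) by simp
  finally show ?thesis .
qed

section \<open>Factorization norms\<close>

lemma norm_2_inf_ge: "i < m \<Longrightarrow> sqrt (\<Sum>j<p. (A i j)\<^sup>2) \<le> norm_2_inf m p A"
  unfolding norm_2_inf_def by (intro Max_ge) auto

lemma norm_1_2_ge: "j < p \<Longrightarrow> sqrt (\<Sum>i<m. (A i j)\<^sup>2) \<le> norm_1_2 m p A"
  unfolding norm_1_2_def by (intro Max_ge) auto

lemma finite_abs_entries: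
  fixes m p :: nat
  shows "finite {\<bar>A i j\<bar> | i j. i < m \<and> j < p}"
proof -
  have "{\<bar>A i j\<bar> | i j. i < m \<and> j < p} = (\<lambda>(i, j). \<bar>A i j\<bar>) ` ({..<m} \<times> {..<p})" by auto
  then show ?thesis by simp
qed

lemma norm_1_inf_ge: "i < m \<Longrightarrow> j < p \<Longrightarrow> \<bar>A i j\<bar> \<le> norm_1_inf m p A"
  unfolding norm_1_inf_def by (intro Max_ge finite_abs_entries) auto

lemma norm_1_inf_le:
  assumes "0 < m" "0 < p" and "\<And>i j. i < m \<Longrightarrow> j < p \<Longrightarrow> \<bar>A i j\<bar> \<le> c"
  shows "norm_1_inf m p A \<le> c"
  unfolding norm_1_inf_def using assms by (intro Max.boundedI finite_abs_entries) auto

lemma norm_2_inf_nonneg: "0 < m \<Longrightarrow> 0 \<le> norm_2_inf m p A"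
  using norm_2_inf_ge[where i = 0 and m = m and p = p and A = A]
  by (meson order_trans real_sqrt_ge_zero sum_nonneg zero_le_power2)

lemma norm_1_2_nonneg: "0 < p \<Longrightarrow> 0 \<le> norm_1_2 m p A"
  using norm_1_2_ge[where j = 0 and m = m and p = p and A = A]
  by (meson order_trans real_sqrt_ge_zero sum_nonneg zero_le_power2)

lemma sum_row_sq_le: "i < m \<Longrightarrow> (\<Sum>j<p. (A i j)\<^sup>2) \<le> (norm_2_inf m p A)\<^sup>2"
  by (rule sqrt_le_D[OF norm_2_inf_ge])

lemma sum_col_sq_le: "j < p \<Longrightarrow> (\<Sum>i<m. (A i j)\<^sup>2) \<le> (norm_1_2 m p A)\<^sup>2"
  by (rule sqrt_le_D[OF norm_1_2_ge])

lemma abs_mat_mult_le: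
  assumes "i < k" "j < \<nu>"
  shows "\<bar>mat_mult l L R i j\<bar> \<le> norm_2_inf k l L * norm_1_2 l \<nu> R"
proof -
  have "\<bar>mat_mult l L R i j\<bar> \<le> sqrt (\<Sum>t<l. (L i t)\<^sup>2) * sqrt (\<Sum>t<l. (R t j)\<^sup>2)"
    unfolding mat_mult_def real_sqrt_mult[symmetric]
    by (rule real_le_rsqrt) (simp add: power2_abs Cauchy_Schwarz_ineq_sum)
  also have "\<dots> \<le> norm_2_inf k l L * norm_1_2 l \<nu> R"
    using assms norm_2_inf_ge norm_1_2_ge norm_2_inf_nonneg[of k l L]
    by (intro mult_mono) (auto intro: sum_nonneg)
  finally show ?thesis .
qed

definition factorization_costs :: "real \<Rightarrow> nat \<Rightarrow> nat \<Rightarrow> (nat \<Rightarrow> nat \<Rightarrow> real) \<Rightarrow> real set" where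
  "factorization_costs \<eta> k \<nu> W = {norm_2_inf k l L * norm_1_2 l \<nu> R | l L R.
     norm_1_inf k \<nu> (\<lambda>i j. mat_mult l L R i j - W i j) \<le> \<eta>}"

lemma gamma_fact_eq_Inf: "gamma_fact \<eta> k \<nu> W = Inf (factorization_costs \<eta> k \<nu> W)"
  unfolding gamma_fact_def factorization_costs_def ..

lemma factorization_costs_nonneg: "0 < k \<Longrightarrow> 0 < \<nu> \<Longrightarrow> x \<in> factorization_costs \<eta> k \<nu> W \<Longrightarrow> 0 \<le> x"
  unfolding factorization_costs_def using norm_2_inf_nonneg norm_1_2_nonneg by auto

lemma factorization_costs_nonempty:
  assumes k: "0 < k" and \<nu>: "0 < \<nu>" and "0 \<le> \<eta>"
  shows "factorization_costs \<eta> k \<nu> W \<noteq> {}"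
proof -
  have "norm_1_inf k \<nu> (\<lambda>i j. mat_mult \<nu> W (\<lambda>t j. of_bool (t = j)) i j - W i j) \<le> \<eta>"
    by (rule norm_1_inf_le[OF k \<nu>]) (simp add: mat_mult_def \<open>0 \<le> \<eta>\<close>)
  then show ?thesis unfolding factorization_costs_def by blast
qed

lemma gamma_fact_nonneg:
  assumes "0 < k" "0 < \<nu>" "0 \<le> \<eta>"
  shows "0 \<le> gamma_fact \<eta> k \<nu> W"
  unfolding gamma_fact_eq_Inf using factorization_costs_nonneg[OF assms(1,2)]
  by (intro cInf_greatest[OF factorization_costs_nonempty[OF assms]]) auto

lemma abs_le_plus_gamma_fact:
  fixes W :: "nat \<Rightarrow> nat \<Rightarrow> real"
  assumes "0 \<le> \<eta>" and i: "i < k" and j: "j < \<nu>"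
  shows "\<bar>W i j\<bar> \<le> \<eta> + gamma_fact \<eta> k \<nu> W"
proof -
  have "\<bar>W i j\<bar> - \<eta> \<le> x" if "x \<in> factorization_costs \<eta> k \<nu> W" for x
  proof -
    from that obtain l L R where x: "x = norm_2_inf k l L * norm_1_2 l \<nu> R"
      and approx: "norm_1_inf k \<nu> (\<lambda>i j. mat_mult l L R i j - W i j) \<le> \<eta>"
      unfolding factorization_costs_def by blast
    show ?thesis
      using norm_1_inf_ge[OF i j, of "\<lambda>i j. mat_mult l L R i j - W i j"] approx
        abs_mat_mult_le[OF i j, of l L R] x by linarith
  qed
  then have "\<bar>W i j\<bar> - \<eta> \<le> gamma_fact \<eta> k \<nu> W"
    unfolding gamma_fact_eq_Inf using assms
    by (intro cInf_greatest factorization_costs_nonempty) auto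
  then show ?thesis by simp
qed

text \<open>The right factor is kept nonzero so that noise calibrated to its column norms is
  nondegenerate; when \<open>gamma_fact\<close> vanishes, \<open>W\<close> is within \<open>\<eta>\<close> of zero and a zero left factor works.\<close>

lemma gamma_fact_witness:
  fixes W :: "nat \<Rightarrow> nat \<Rightarrow> real"
  assumes k: "0 < k" and \<nu>: "0 < \<nu>" and \<eta>: "0 \<le> \<eta>"
  obtains l L R where "norm_1_inf k \<nu> (\<lambda>i j. mat_mult l L R i j - W i j) \<le> \<eta>"
    and "0 < norm_1_2 l \<nu> R" and "norm_2_inf k l L * norm_1_2 l \<nu> R \<le> 2 * gamma_fact \<eta> k \<nu> W"
proof (cases "gamma_fact \<eta> k \<nu> W = 0")
  case True
  show ?thesis
  proof (rule that[of 1 "\<lambda>_ _. 0" "\<lambda>_ _. 1"])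
    show "norm_1_inf k \<nu> (\<lambda>i j. mat_mult 1 (\<lambda>_ _. 0) (\<lambda>_ _. 1) i j - W i j) \<le> \<eta>"
      using abs_le_plus_gamma_fact[OF \<eta>, of _ k _ \<nu> W] True
      by (intro norm_1_inf_le[OF k \<nu>]) (simp add: mat_mult_def)
    show "0 < norm_1_2 1 \<nu> (\<lambda>_ _. 1)"
      using norm_1_2_ge[OF \<nu>, where m = 1 and A = "\<lambda>_ _. 1"] by simp
    have "\<exists>i. i < k" using k by blast
    then show "norm_2_inf k 1 (\<lambda>_ _. 0) * norm_1_2 1 \<nu> (\<lambda>_ _. 1) \<le> 2 * gamma_fact \<eta> k \<nu> W"
      unfolding True norm_2_inf_def by simp
  qed
next
  case False
  then have \<gamma>: "0 < gamma_fact \<eta> k \<nu> W" using gamma_fact_nonneg[OF k \<nu> \<eta>, of W] by (simp add: less_le)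
  then have "Inf (factorization_costs \<eta> k \<nu> W) < 2 * gamma_fact \<eta> k \<nu> W"
    unfolding gamma_fact_eq_Inf by simp
  then obtain x where x: "x \<in> factorization_costs \<eta> k \<nu> W" "x < 2 * gamma_fact \<eta> k \<nu> W"
    using cInf_lessD[OF factorization_costs_nonempty[OF k \<nu> \<eta>]] by blast
  moreover have "gamma_fact \<eta> k \<nu> W \<le> x"
    unfolding gamma_fact_eq_Inf using x(1) factorization_costs_nonneg[OF k \<nu>]
    by (intro cInf_lower) (auto simp: bdd_below_def)
  ultimately obtain l L R where "x = norm_2_inf k l L * norm_1_2 l \<nu> R"
    and "norm_1_inf k \<nu> (\<lambda>i j. mat_mult l L R i j - W i j) \<le> \<eta>"
    unfolding factorization_costs_def by blast
  moreover have "0 < norm_1_2 l \<nu> R"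
    using calculation \<open>gamma_fact \<eta> k \<nu> W \<le> x\<close> \<gamma> norm_1_2_nonneg[OF \<nu>, of l R]
    by (metis antisym_conv1 mult_not_zero not_le order.trans)
  ultimately show ?thesis using that x(2) by auto
qed

lemma sum_sq_weighted_columns_le:
  fixes c :: "nat \<Rightarrow> real" and R :: "nat \<Rightarrow> nat \<Rightarrow> real"
  assumes col: "\<And>j. j < \<nu> \<Longrightarrow> (\<Sum>t<l. (R t j)\<^sup>2) \<le> r\<^sup>2"
  shows "(\<Sum>t<l. (\<Sum>j<\<nu>. c j * R t j)\<^sup>2) \<le> (\<Sum>j<\<nu>. \<bar>c j\<bar>)\<^sup>2 * r\<^sup>2"
proof -
  \<comment> \<open>Cauchy-Schwarz with weights \<open>\<bar>c j\<bar>\<close>\<close>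
  have row: "(\<Sum>j<\<nu>. c j * R t j)\<^sup>2 \<le> (\<Sum>j<\<nu>. \<bar>c j\<bar>) * (\<Sum>j<\<nu>. \<bar>c j\<bar> * (R t j)\<^sup>2)" for t
  proof -
    have "\<bar>\<Sum>j<\<nu>. c j * R t j\<bar> \<le> (\<Sum>j<\<nu>. \<bar>c j\<bar> * \<bar>R t j\<bar>)"
      by (rule order.trans[OF sum_abs]) (simp add: abs_mult)
    also have "\<dots> = (\<Sum>j<\<nu>. sqrt \<bar>c j\<bar> * (sqrt \<bar>c j\<bar> * \<bar>R t j\<bar>))"
      by (simp add: mult.assoc[symmetric])
    finally have "\<bar>\<Sum>j<\<nu>. c j * R t j\<bar>\<^sup>2 \<le> (\<Sum>j<\<nu>. sqrt \<bar>c j\<bar> * (sqrt \<bar>c j\<bar> * \<bar>R t j\<bar>))\<^sup>2"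
      by (rule power_mono) simp
    then have "(\<Sum>j<\<nu>. c j * R t j)\<^sup>2 \<le> (\<Sum>j<\<nu>. sqrt \<bar>c j\<bar> * (sqrt \<bar>c j\<bar> * \<bar>R t j\<bar>))\<^sup>2"
      by simp
    also have "\<dots> \<le> (\<Sum>j<\<nu>. (sqrt \<bar>c j\<bar>)\<^sup>2) * (\<Sum>j<\<nu>. (sqrt \<bar>c j\<bar> * \<bar>R t j\<bar>)\<^sup>2)"
      by (rule Cauchy_Schwarz_ineq_sum)
    finally show ?thesis by (simp add: power_mult_distrib)
  qed
  have "(\<Sum>t<l. (\<Sum>j<\<nu>. c j * R t j)\<^sup>2) \<le> (\<Sum>t<l. (\<Sum>j<\<nu>. \<bar>c j\<bar>) * (\<Sum>j<\<nu>. \<bar>c j\<bar> * (R t j)\<^sup>2))"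
    by (intro sum_mono row)
  also have "\<dots> = (\<Sum>j<\<nu>. \<bar>c j\<bar>) * (\<Sum>t<l. \<Sum>j<\<nu>. \<bar>c j\<bar> * (R t j)\<^sup>2)"
    by (rule sum_distrib_left[symmetric])
  also have "\<dots> = (\<Sum>j<\<nu>. \<bar>c j\<bar>) * (\<Sum>j<\<nu>. \<bar>c j\<bar> * (\<Sum>t<l. (R t j)\<^sup>2))"
    by (subst sum.swap) (simp only: sum_distrib_left)
  also have "\<dots> \<le> (\<Sum>j<\<nu>. \<bar>c j\<bar>) * (\<Sum>j<\<nu>. \<bar>c j\<bar> * r\<^sup>2)"
    using col by (intro mult_left_mono sum_mono) (auto simp: sum_nonneg)
  also have "\<dots> = (\<Sum>j<\<nu>. \<bar>c j\<bar>)\<^sup>2 * r\<^sup>2"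
    by (simp add: sum_distrib_right[symmetric] power2_eq_square)
  finally show ?thesis .
qed

section \<open>The mechanism\<close>

definition degree_encoding :: "nat \<Rightarrow> nat \<Rightarrow> (nat \<Rightarrow> nat \<Rightarrow> real) \<Rightarrow> nat set \<Rightarrow> nat \<Rightarrow> real" where
  "degree_encoding \<nu> s R S t = (\<Sum>j<\<nu>. R t j * blur_prob s (card S) j)"

lemma sum_abs_blur_prob_deg_diff_le:
  assumes s: "0 < s" and N: "\<forall>e. v \<notin> e \<longrightarrow> (e \<in> G \<longleftrightarrow> e \<in> G')"
  shows "(\<Sum>j<\<nu>. \<bar>blur_prob s (deg G i) j - blur_prob s (deg G' i) j\<bar>) \<le> (if i = v then 2 else 2 / s)"
proof (cases "i = v")
  case False
  have "\<forall>e. v \<notin> e \<longrightarrow> (e \<in> G' \<longleftrightarrow> e \<in> G)" using N by blast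
  then have "deg G i \<le> Suc (deg G' i)" "deg G' i \<le> Suc (deg G i)"
    using deg_le_Suc_deg_of_node_neighbor[OF N False] deg_le_Suc_deg_of_node_neighbor[OF _ False]
    by blast+
  then show ?thesis using False by (simp add: sum_abs_blur_prob_diff_le_adjacent[OF s])
qed (simp add: sum_abs_blur_prob_diff_le[OF s])

lemma sum_sq_degree_encoding_diff_le:
  assumes s: "0 < s" and col: "\<And>j. j < \<nu> \<Longrightarrow> (\<Sum>t<l. (R t j)\<^sup>2) \<le> r\<^sup>2"
    and N: "\<forall>e. v \<notin> e \<longrightarrow> (e \<in> G \<longleftrightarrow> e \<in> G')"
  shows "(\<Sum>i<n. \<Sum>t<l. (degree_encoding \<nu> s R (nbhd G i) t - degree_encoding \<nu> s R (nbhd G' i) t)\<^sup>2)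
    \<le> (4 + 4 * real n / (real s)\<^sup>2) * r\<^sup>2"
proof -
  define b where "b i = (if i = v then 2 else 2 / real s)" for i
  have node: "(\<Sum>t<l. (degree_encoding \<nu> s R (nbhd G i) t - degree_encoding \<nu> s R (nbhd G' i) t)\<^sup>2)
      \<le> (b i)\<^sup>2 * r\<^sup>2" for i
  proof -
    define c where "c j = blur_prob s (deg G i) j - blur_prob s (deg G' i) j" for j
    have "degree_encoding \<nu> s R (nbhd G i) t - degree_encoding \<nu> s R (nbhd G' i) t
        = (\<Sum>j<\<nu>. c j * R t j)" for t
      unfolding degree_encoding_def c_def deg_def by (simp add: sum_subtractf[symmetric] algebra_simps)
    then have "(\<Sum>t<l. (degree_encoding \<nu> s R (nbhd G i) t - degree_encoding \<nu> s R (nbhd G' i) t)\<^sup>2)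
        = (\<Sum>t<l. (\<Sum>j<\<nu>. c j * R t j)\<^sup>2)"
      by simp
    also have "\<dots> \<le> (\<Sum>j<\<nu>. \<bar>c j\<bar>)\<^sup>2 * r\<^sup>2"
      by (rule sum_sq_weighted_columns_le[OF col])
    also have "\<dots> \<le> (b i)\<^sup>2 * r\<^sup>2"
      using sum_abs_blur_prob_deg_diff_le[OF s N, where \<nu> = \<nu> and i = i] unfolding c_def b_def
      by (intro mult_right_mono power_mono) (auto intro: sum_nonneg)
    finally show ?thesis .
  qed
  have "(\<Sum>i<n. \<Sum>t<l. (degree_encoding \<nu> s R (nbhd G i) t - degree_encoding \<nu> s R (nbhd G' i) t)\<^sup>2)
      \<le> (\<Sum>i<n. (b i)\<^sup>2) * r\<^sup>2"
    unfolding sum_distrib_right by (intro sum_mono node)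
  also have "(\<Sum>i<n. (b i)\<^sup>2) \<le> (\<Sum>i<n. 4 / (real s)\<^sup>2 + (if i = v then 4 else 0))"
    unfolding b_def by (intro sum_mono) (simp add: power_divide)
  also have "\<dots> \<le> 4 + 4 * real n / (real s)\<^sup>2"
    by (simp add: sum.distrib mult.commute)
  finally show ?thesis by (simp add: mult_right_mono)
qed

definition gaussian_randomizer ::
    "nat \<Rightarrow> real \<Rightarrow> nat \<Rightarrow> nat \<Rightarrow> (nat \<Rightarrow> nat \<Rightarrow> real) \<Rightarrow> (nat \<Rightarrow> real) \<Rightarrow> nat \<Rightarrow> nat set
      \<Rightarrow> (nat \<Rightarrow> real) measure" where
  "gaussian_randomizer l \<sigma> \<nu> s R \<rho> i S = gaussian_vector l \<sigma> (degree_encoding \<nu> s R S)"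

definition averaged_estimate ::
    "nat \<Rightarrow> nat \<Rightarrow> nat \<Rightarrow> (nat \<Rightarrow> nat \<Rightarrow> real) \<Rightarrow> (nat \<Rightarrow> nat \<Rightarrow> real) \<Rightarrow> nat \<Rightarrow> real" where
  "averaged_estimate n l k L y j = (if j < k then (\<Sum>i<n. \<Sum>t<l. L j t * y i t) / n else 0)"

definition trivial_public_string :: "(nat \<Rightarrow> real) measure" where
  "trivial_public_string = return (count_space UNIV) (\<lambda>_. 0)"

lemma node_outputs_gaussian_randomizer:
  "node_outputs n (gaussian_randomizer l \<sigma> \<nu> s R) \<rho> G
     = gaussian_array n l \<sigma> (\<lambda>i. degree_encoding \<nu> s R (nbhd G i))"
  unfolding node_outputs_def gaussian_array_def gaussian_randomizer_def ..

lemma measurable_averaged_estimate: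
  "averaged_estimate n l k L \<in> measurable (PiM {..<n} (\<lambda>_. PiM {..<l} (\<lambda>_. borel))) vec_space"
  unfolding vec_space_def
proof (rule measurable_PiM_single')
  fix j
  have [measurable]: "(\<lambda>y. y i t) \<in> borel_measurable (PiM {..<n} (\<lambda>_. PiM {..<l} (\<lambda>_. borel)))"
    if "i \<in> {..<n}" "t \<in> {..<l}" for i t
    using that by (rule measurable_PiM_entry)
  show "(\<lambda>y. averaged_estimate n l k L y j) \<in> borel_measurable (PiM {..<n} (\<lambda>_. PiM {..<l} (\<lambda>_. borel)))"
    unfolding averaged_estimate_def by measurable
qed auto

lemma measurable_averaged_estimate_gaussian_array:
  "averaged_estimate n l k L \<in> measurable (gaussian_array n l \<sigma> \<mu>) vec_space"
proof -
  have "sets (gaussian_array n l \<sigma> \<mu>) = sets (PiM {..<n} (\<lambda>_. PiM {..<l} (\<lambda>_. borel)))"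
    unfolding gaussian_array_def by (intro sets_PiM_cong refl) (simp add: sets_gaussian_vector)
  then show ?thesis
    by (subst measurable_cong_sets[OF _ refl]) (assumption, rule measurable_averaged_estimate)
qed

lemma distr_averaged_estimate_in_subprob_algebra:
  "0 < \<sigma> \<Longrightarrow> distr (gaussian_array n l \<sigma> \<mu>) vec_space (averaged_estimate n l k L)
     \<in> space (subprob_algebra vec_space)"
  using prob_space_gaussian_array measurable_averaged_estimate_gaussian_array
  by (auto simp: space_subprob_algebra intro!: prob_space_imp_subprob_space prob_space.prob_space_distr)

lemma alg_output_gaussian_randomizer:
  assumes "0 < \<sigma>"
  shows "alg_output n trivial_public_string (gaussian_randomizer l \<sigma> \<nu> s R) (averaged_estimate n l k L)
      vec_space G
    = distr (gaussian_array n l \<sigma> (\<lambda>i. degree_encoding \<nu> s R (nbhd G i))) vec_space (averaged_estimate n l k L)"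
  unfolding alg_output_def trivial_public_string_def node_outputs_gaussian_randomizer
  by (rule bind_return[OF measurable_const[OF distr_averaged_estimate_in_subprob_algebra[OF assms]]]) simp

lemma gaussian_mechanism_LNDP:
  assumes \<sigma>: "0 < \<sigma>" and \<epsilon>: "0 < \<epsilon>" "\<epsilon> \<le> 1" and \<delta>: "0 < \<delta>" "\<delta> \<le> 1/2" and s: "0 < s"
    and col: "\<And>j. j < \<nu> \<Longrightarrow> (\<Sum>t<l. (R t j)\<^sup>2) \<le> r\<^sup>2"
    and noise: "(4 + 4 * real n / (real s)\<^sup>2) * r\<^sup>2 \<le> \<sigma>\<^sup>2 * \<epsilon>\<^sup>2 / (8 * ln (1/\<delta>))"
  shows "LNDP \<epsilon> \<delta> n trivial_public_string (PiM {..<l} (\<lambda>_. borel)) (gaussian_randomizer l \<sigma> \<nu> s R)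
    (averaged_estimate n l k L) vec_space"
  unfolding LNDP_def
proof (intro conjI ballI allI impI)
  show "prob_space trivial_public_string"
    unfolding trivial_public_string_def by (rule prob_space_return) simp
  show "gaussian_randomizer l \<sigma> \<nu> s R \<rho> i S \<in> space (prob_algebra (PiM {..<l} (\<lambda>_. borel)))" for \<rho> i S
    unfolding gaussian_randomizer_def space_prob_algebra
    using sets_gaussian_vector prob_space_gaussian_vector[OF \<sigma>] by auto
  show "averaged_estimate n l k L \<in> PiM {..<n} (\<lambda>_. PiM {..<l} (\<lambda>_. borel)) \<rightarrow>\<^sub>M vec_space"
    by (rule measurable_averaged_estimate)
  show "(\<lambda>\<rho>. distr (node_outputs n (gaussian_randomizer l \<sigma> \<nu> s R) \<rho> G) vec_space (averaged_estimate n l k L))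
      \<in> trivial_public_string \<rightarrow>\<^sub>M subprob_algebra vec_space" for G
    unfolding node_outputs_gaussian_randomizer
    by (intro measurable_const distr_averaged_estimate_in_subprob_algebra[OF \<sigma>])
next
  fix \<rho> G G'
  assume "simple_graph n G \<and> simple_graph n G' \<and> node_neighbors n G G'"
  then obtain v where N: "\<forall>e. v \<notin> e \<longrightarrow> (e \<in> G \<longleftrightarrow> e \<in> G')"
    unfolding node_neighbors_def by auto
  let ?\<mu> = "\<lambda>G i. degree_encoding \<nu> s R (nbhd G i)"
  have N': "\<forall>e. v \<notin> e \<longrightarrow> (e \<in> G' \<longleftrightarrow> e \<in> G)" using N by blast
  have dist: "(\<Sum>i<n. \<Sum>t<l. (?\<mu> G i t - ?\<mu> G' i t)\<^sup>2) \<le> \<sigma>\<^sup>2 * \<epsilon>\<^sup>2 / (8 * ln (1/\<delta>))"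
    "(\<Sum>i<n. \<Sum>t<l. (?\<mu> G' i t - ?\<mu> G i t)\<^sup>2) \<le> \<sigma>\<^sup>2 * \<epsilon>\<^sup>2 / (8 * ln (1/\<delta>))"
    using sum_sq_degree_encoding_diff_le[where \<nu> = \<nu> and R = R and n = n, OF s col N]
      sum_sq_degree_encoding_diff_le[where \<nu> = \<nu> and R = R and n = n, OF s col N'] noise
    by linarith+
  show "indist \<epsilon> \<delta> (node_outputs n (gaussian_randomizer l \<sigma> \<nu> s R) \<rho> G)
      (node_outputs n (gaussian_randomizer l \<sigma> \<nu> s R) \<rho> G')"
    unfolding node_outputs_gaussian_randomizer indist_def
    by (intro conjI ballI measure_gaussian_array_le[OF \<sigma> \<epsilon> \<delta>] dist)
qed

lemma averaged_estimate_degree_encoding: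
  assumes G: "simple_graph n G" and n: "0 < n" and j: "j < k"
  shows "averaged_estimate n l k L (\<lambda>i. degree_encoding \<nu> s R (nbhd G i)) j
       = (\<Sum>j'<\<nu>. mat_mult l L R j j' * blurry_deg_dist n s G j')"
proof -
  have "(\<Sum>i<n. \<Sum>t<l. L j t * degree_encoding \<nu> s R (nbhd G i) t)
      = (\<Sum>i<n. \<Sum>t<l. \<Sum>j'<\<nu>. L j t * R t j' * blur_prob s (deg G i) j')"
    unfolding degree_encoding_def deg_def by (simp add: sum_distrib_left mult.assoc)
  also have "\<dots> = (\<Sum>j'<\<nu>. \<Sum>i<n. \<Sum>t<l. L j t * R t j' * blur_prob s (deg G i) j')"
    by (subst sum.swap) (simp only: sum.swap[of _ "{..<l}"])
  also have "\<dots> = (\<Sum>j'<\<nu>. mat_mult l L R j j' * (\<Sum>i<n. blur_prob s (deg G i) j'))"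
    unfolding mat_mult_def by (simp add: sum_distrib_left sum_distrib_right)
  finally show ?thesis
    unfolding averaged_estimate_def blurry_deg_dist_eq[OF G n] using j
    by (simp add: sum_divide_distrib[of _ "{..<\<nu>}"])
qed

lemma abs_sum_diff_blurry_deg_dist_le:
  assumes G: "simple_graph n G" and n: "0 < n" and s: "0 < s" and \<eta>: "0 \<le> \<eta>"
    and ab: "\<And>j. j < \<nu> \<Longrightarrow> \<bar>a j - b j\<bar> \<le> \<eta>"
  shows "\<bar>(\<Sum>j<\<nu>. a j * blurry_deg_dist n s G j) - (\<Sum>j<\<nu>. b j * blurry_deg_dist n s G j)\<bar> \<le> \<eta>"
proof -
  have "\<bar>(\<Sum>j<\<nu>. a j * blurry_deg_dist n s G j) - (\<Sum>j<\<nu>. b j * blurry_deg_dist n s G j)\<bar>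
      \<le> (\<Sum>j<\<nu>. \<bar>a j - b j\<bar> * blurry_deg_dist n s G j)"
    unfolding sum_subtractf[symmetric] left_diff_distrib[symmetric]
    by (rule order.trans[OF sum_abs]) (simp add: abs_mult blurry_deg_dist_nonneg[OF G n s])
  also have "\<dots> \<le> (\<Sum>j<\<nu>. \<eta> * blurry_deg_dist n s G j)"
    using ab blurry_deg_dist_nonneg[OF G n s] by (intro sum_mono mult_right_mono) auto
  also have "\<dots> \<le> \<eta>"
    using sum_blurry_deg_dist_le[OF G n s] \<eta> by (simp add: sum_distrib_left[symmetric] mult_left_le)
  finally show ?thesis .
qed

lemma sup_err_averaged_estimate_le:
  fixes W :: "nat \<Rightarrow> nat \<Rightarrow> real"
  assumes G: "simple_graph n G" and n: "0 < n" and s: "0 < s" and k: "0 < k" and \<eta>: "0 \<le> \<eta>"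
    and approx: "\<And>j j'. j < k \<Longrightarrow> j' < \<nu> \<Longrightarrow> \<bar>mat_mult l L R j j' - W j j'\<bar> \<le> \<eta>"
  defines "\<mu> \<equiv> \<lambda>i. degree_encoding \<nu> s R (nbhd G i)"
  shows "sup_err k (averaged_estimate n l k L y) (\<lambda>j. \<Sum>j'<\<nu>. W j j' * blurry_deg_dist n s G j')
    \<le> \<eta> + Max {\<bar>\<Sum>i<n. \<Sum>t<l. L j t / n * (y i t - \<mu> i t)\<bar> | j. j < k}"
proof -
  let ?Z = "\<lambda>j. \<Sum>i<n. \<Sum>t<l. L j t / n * (y i t - \<mu> i t)"
  have "\<bar>averaged_estimate n l k L y j - (\<Sum>j'<\<nu>. W j j' * blurry_deg_dist n s G j')\<bar>
      \<le> \<eta> + \<bar>?Z j\<bar>" if j: "j < k" for j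
  proof -
    have "averaged_estimate n l k L y j = averaged_estimate n l k L \<mu> j + ?Z j"
      unfolding averaged_estimate_def using j
      by (simp add: sum_divide_distrib[symmetric] sum.distrib[symmetric] algebra_simps sum_subtractf)
    moreover have "averaged_estimate n l k L \<mu> j = (\<Sum>j'<\<nu>. mat_mult l L R j j' * blurry_deg_dist n s G j')"
      unfolding \<mu>_def by (rule averaged_estimate_degree_encoding[OF G n j])
    moreover have "\<bar>(\<Sum>j'<\<nu>. mat_mult l L R j j' * blurry_deg_dist n s G j')
        - (\<Sum>j'<\<nu>. W j j' * blurry_deg_dist n s G j')\<bar> \<le> \<eta>"
      using approx[OF j] by (rule abs_sum_diff_blurry_deg_dist_le[OF G n s \<eta>])
    ultimately show ?thesis by linarith
  qed
  moreover have "\<bar>?Z j\<bar> \<le> Max {\<bar>?Z j\<bar> | j. j < k}" if "j < k" for j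
    using that by (intro Max_ge) auto
  ultimately have "\<bar>averaged_estimate n l k L y j - (\<Sum>j'<\<nu>. W j j' * blurry_deg_dist n s G j')\<bar>
      \<le> \<eta> + Max {\<bar>?Z j\<bar> | j. j < k}" if "j < k" for j
    using that by (meson add_left_mono order.trans)
  then show ?thesis
    unfolding sup_err_def using k by (intro Max.boundedI) auto
qed

lemma subgaussian_gaussian_array_average:
  assumes \<sigma>: "0 < \<sigma>" and n: "0 < n" and row: "(\<Sum>t<l. (L j t)\<^sup>2) \<le> a\<^sup>2"
  shows "subgaussian (gaussian_array n l \<sigma> \<mu>) (\<lambda>y. \<Sum>i<n. \<Sum>t<l. L j t / n * (y i t - \<mu> i t))
    (\<sigma>\<^sup>2 * a\<^sup>2 / n)"
proof (rule subgaussian_mono)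
  show "subgaussian (gaussian_array n l \<sigma> \<mu>) (\<lambda>y. \<Sum>i<n. \<Sum>t<l. L j t / n * (y i t - \<mu> i t))
      (\<sigma>\<^sup>2 * (\<Sum>i<n. \<Sum>t<l. (L j t / n)\<^sup>2))"
    by (rule subgaussian_gaussian_array_linear[OF \<sigma>])
  have "(\<Sum>i<n. \<Sum>t<l. (L j t / n)\<^sup>2) = (\<Sum>t<l. (L j t)\<^sup>2) / n"
    using n by (simp add: power_divide sum_divide_distrib[symmetric] power2_eq_square)
  also have "\<dots> \<le> a\<^sup>2 / n"
    using row by (simp add: divide_right_mono)
  finally show "\<sigma>\<^sup>2 * (\<Sum>i<n. \<Sum>t<l. (L j t / n)\<^sup>2) \<le> \<sigma>\<^sup>2 * a\<^sup>2 / n"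
    by (simp add: mult_left_mono times_divide_eq_right[symmetric] del: times_divide_eq_right)
qed

lemma measurable_sup_err: "(\<lambda>x. sup_err k x c) \<in> borel_measurable vec_space"
proof -
  have [measurable]: "(\<lambda>x. x i) \<in> borel_measurable vec_space" for i :: nat
    unfolding vec_space_def by (rule measurable_component_singleton) simp
  show ?thesis unfolding sup_err_def by (rule measurable_Max_lessThan) measurable
qed

lemma gaussian_mechanism_error_le:
  fixes W :: "nat \<Rightarrow> nat \<Rightarrow> real"
  assumes \<sigma>: "0 < \<sigma>" and n: "0 < n" and s: "0 < s" and k: "2 \<le> k" and \<eta>: "0 \<le> \<eta>"
    and G: "simple_graph n G"
    and approx: "\<And>j j'. j < k \<Longrightarrow> j' < \<nu> \<Longrightarrow> \<bar>mat_mult l L R j j' - W j j'\<bar> \<le> \<eta>"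
    and row: "\<And>j. j < k \<Longrightarrow> (\<Sum>t<l. (L j t)\<^sup>2) \<le> a\<^sup>2"
  shows "(\<integral>\<^sup>+ x. ennreal (sup_err k x (\<lambda>j. \<Sum>j'<\<nu>. W j j' * blurry_deg_dist n s G j'))
      \<partial>alg_output n trivial_public_string (gaussian_randomizer l \<sigma> \<nu> s R) (averaged_estimate n l k L)
        vec_space G)
    \<le> ennreal (\<eta> + sqrt (2 * ln (2 * real k) * (\<sigma>\<^sup>2 * a\<^sup>2 / n)))"
proof -
  let ?\<mu> = "\<lambda>i. degree_encoding \<nu> s R (nbhd G i)"
  let ?P = "gaussian_array n l \<sigma> ?\<mu>"
  let ?f = "\<lambda>j. \<Sum>j'<\<nu>. W j j' * blurry_deg_dist n s G j'"
  interpret P: prob_space ?P by (rule prob_space_gaussian_array[OF \<sigma>])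
  have Z: "subgaussian ?P (\<lambda>y. \<Sum>i<n. \<Sum>t<l. L j t / n * (y i t - ?\<mu> i t)) (\<sigma>\<^sup>2 * a\<^sup>2 / n)"
    if "j < k" for j
    using \<sigma> n row[OF that] by (rule subgaussian_gaussian_array_average)
  have "(\<integral>\<^sup>+ x. ennreal (sup_err k x ?f)
      \<partial>alg_output n trivial_public_string (gaussian_randomizer l \<sigma> \<nu> s R) (averaged_estimate n l k L) vec_space G)
      = (\<integral>\<^sup>+ y. ennreal (sup_err k (averaged_estimate n l k L y) ?f) \<partial>?P)"
    unfolding alg_output_gaussian_randomizer[OF \<sigma>]
    using measurable_averaged_estimate_gaussian_array measurable_sup_err by (simp add: nn_integral_distr)
  also have "\<dots> \<le> ennreal (\<eta> + sqrt (2 * ln (2 * real k) * (\<sigma>\<^sup>2 * a\<^sup>2 / n)))"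
  proof (rule P.nn_integral_le_plus_Max_abs_subgaussian[OF k _ \<eta> Z])
    fix y
    show "sup_err k (averaged_estimate n l k L y) ?f
        \<le> \<eta> + Max {\<bar>\<Sum>i<n. \<Sum>t<l. L j t / n * (y i t - ?\<mu> i t)\<bar> | j. j < k}"
      using k by (intro sup_err_averaged_estimate_le[where \<nu> = \<nu> and R = R, OF G n s _ \<eta> approx]) auto
  qed simp
  finally show ?thesis .
qed

text \<open>The smallest noise scale for which the sensitivity bound \<open>(4 + 4 n / s\<^sup>2) r\<^sup>2\<close> meets the
  hypothesis of \<open>measure_gaussian_array_le\<close>.\<close>

definition calibrated_noise :: "real \<Rightarrow> real \<Rightarrow> nat \<Rightarrow> nat \<Rightarrow> real \<Rightarrow> real" where
  "calibrated_noise \<epsilon> \<delta> n s r = sqrt (32 * ln (1/\<delta>) * (1 + real n / (real s)\<^sup>2)) * r / \<epsilon>"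

lemma calibrated_noise_pos:
  "0 < \<epsilon> \<Longrightarrow> 0 < \<delta> \<Longrightarrow> \<delta> < 1 \<Longrightarrow> 0 < r \<Longrightarrow> 0 < calibrated_noise \<epsilon> \<delta> n s r"
  unfolding calibrated_noise_def by (simp add: add_pos_nonneg)

lemma calibrated_noise_sq:
  assumes "0 < \<epsilon>" "0 < \<delta>" "\<delta> < 1"
  shows "(calibrated_noise \<epsilon> \<delta> n s r)\<^sup>2 = 32 * ln (1/\<delta>) * (1 + real n / (real s)\<^sup>2) * r\<^sup>2 / \<epsilon>\<^sup>2"
  unfolding calibrated_noise_def using assms by (simp add: power_divide power_mult_distrib add_pos_nonneg)

lemma error_bound_calibrated_noise_le:
  assumes k: "2 \<le> k" and n: "0 < n" and s: "0 < s" and \<epsilon>: "0 < \<epsilon>" and \<delta>: "0 < \<delta>" "\<delta> < 1"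
    and a: "0 \<le> a" and r: "0 \<le> r" and ar: "a * r \<le> 2 * \<gamma>" and \<eta>: "0 \<le> \<eta>"
  shows "\<eta> + sqrt (2 * ln (2 * real k) * ((calibrated_noise \<epsilon> \<delta> n s r)\<^sup>2 * a\<^sup>2 / n))
    \<le> 32 * (\<eta> + \<gamma> * sqrt ((1 / real n + 1 / (real s)\<^sup>2) * ln (real k)) * sqrt (ln (1 / \<delta>)) / \<epsilon>)"
proof -
  define Q where "Q = (1 / real n + 1 / (real s)\<^sup>2) * ln (real k) * ln (1 / \<delta>) / \<epsilon>\<^sup>2"
  have Q: "0 \<le> Q" unfolding Q_def using k \<delta> by simp
  have "0 \<le> a * r" using a r by simp
  then have \<gamma>: "0 \<le> \<gamma>" and ar2: "(a * r)\<^sup>2 \<le> (2 * \<gamma>)\<^sup>2"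
    using ar power_mono[OF ar \<open>0 \<le> a * r\<close>, of 2] by linarith+
  have "2 * ln (2 * real k) * ((calibrated_noise \<epsilon> \<delta> n s r)\<^sup>2 * a\<^sup>2 / n)
      = 64 * (ln (2 * real k) / ln (real k)) * (a * r)\<^sup>2 * Q"
    unfolding calibrated_noise_sq[OF \<epsilon> \<delta>] Q_def using k n s \<epsilon>
    by (simp add: field_simps power_mult_distrib)
  also have "\<dots> \<le> 64 * 2 * (2 * \<gamma>)\<^sup>2 * Q"
  proof -
    have "ln (2 * real k) / ln (real k) \<le> 2"
      using k ln_mult[of 2 "real k"] ln_le_cancel_iff[of 2 "real k"] by (simp add: field_simps)
    then show ?thesis
      using ar2 Q k by (intro mult_right_mono mult_mono) auto
  qed
  also have "\<dots> \<le> (32 * \<gamma> * sqrt Q)\<^sup>2"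
    using Q by (simp add: power_mult_distrib)
  finally have "sqrt (2 * ln (2 * real k) * ((calibrated_noise \<epsilon> \<delta> n s r)\<^sup>2 * a\<^sup>2 / n)) \<le> 32 * \<gamma> * sqrt Q"
    using \<gamma> Q by (simp add: real_le_lsqrt)
  also have "sqrt Q = sqrt ((1 / real n + 1 / (real s)\<^sup>2) * ln (real k)) * sqrt (ln (1 / \<delta>)) / \<epsilon>"
    unfolding Q_def using \<epsilon> by (simp add: real_sqrt_mult real_sqrt_divide)
  finally show ?thesis using \<eta> by (simp add: algebra_simps)
qed

lemma calibrated_noise_privacy_le:
  assumes "0 < \<epsilon>" "0 < \<delta>" "\<delta> < 1"
  shows "(4 + 4 * real n / (real s)\<^sup>2) * r\<^sup>2 \<le> (calibrated_noise \<epsilon> \<delta> n s r)\<^sup>2 * \<epsilon>\<^sup>2 / (8 * ln (1/\<delta>))"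
  unfolding calibrated_noise_sq[OF assms] using assms by (simp add: field_simps)

lemma calibrated_gaussian_mechanism:
  fixes W :: "nat \<Rightarrow> nat \<Rightarrow> real"
  assumes \<epsilon>: "0 < \<epsilon>" "\<epsilon> \<le> 1" and \<delta>: "0 < \<delta>" "\<delta> \<le> 1/2" and n: "0 < n" and s: "0 < s"
    and k: "2 \<le> k" and \<eta>: "0 \<le> \<eta>"
    and approx: "norm_1_inf k \<nu> (\<lambda>i j. mat_mult l L R i j - W i j) \<le> \<eta>"
    and r: "0 < norm_1_2 l \<nu> R" and ar: "norm_2_inf k l L * norm_1_2 l \<nu> R \<le> 2 * \<gamma>"
  defines "\<sigma> \<equiv> calibrated_noise \<epsilon> \<delta> n s (norm_1_2 l \<nu> R)"
  shows "LNDP \<epsilon> \<delta> n trivial_public_string (PiM {..<l} (\<lambda>_. borel)) (gaussian_randomizer l \<sigma> \<nu> s R)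
      (averaged_estimate n l k L) vec_space"
    and "simple_graph n G \<Longrightarrow>
      (\<integral>\<^sup>+ x. ennreal (sup_err k x (\<lambda>i. \<Sum>j<\<nu>. W i j * blurry_deg_dist n s G j))
        \<partial>alg_output n trivial_public_string (gaussian_randomizer l \<sigma> \<nu> s R) (averaged_estimate n l k L)
          vec_space G)
      \<le> ennreal (32 * (\<eta> + \<gamma> * sqrt ((1 / real n + 1 / (real s)\<^sup>2) * ln (real k))
          * sqrt (ln (1 / \<delta>)) / \<epsilon>))"
proof -
  have \<delta>1: "\<delta> < 1" using \<delta> by simp
  have \<sigma>: "0 < \<sigma>" unfolding \<sigma>_def using \<epsilon>(1) \<delta>(1) \<delta>1 r by (rule calibrated_noise_pos)
  show "LNDP \<epsilon> \<delta> n trivial_public_string (PiM {..<l} (\<lambda>_. borel)) (gaussian_randomizer l \<sigma> \<nu> s R)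
      (averaged_estimate n l k L) vec_space"
    using \<sigma> calibrated_noise_privacy_le[OF \<epsilon>(1) \<delta>(1) \<delta>1, of n s "norm_1_2 l \<nu> R"]
    unfolding \<sigma>_def by (intro gaussian_mechanism_LNDP[OF _ \<epsilon> \<delta> s sum_col_sq_le])
  assume "simple_graph n G"
  have "(\<integral>\<^sup>+ x. ennreal (sup_err k x (\<lambda>i. \<Sum>j<\<nu>. W i j * blurry_deg_dist n s G j))
      \<partial>alg_output n trivial_public_string (gaussian_randomizer l \<sigma> \<nu> s R) (averaged_estimate n l k L)
        vec_space G)
    \<le> ennreal (\<eta> + sqrt (2 * ln (2 * real k) * (\<sigma>\<^sup>2 * (norm_2_inf k l L)\<^sup>2 / n)))"
    by (rule gaussian_mechanism_error_le[OF \<sigma> n s k \<eta> \<open>simple_graph n G\<close>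
      order.trans[OF norm_1_inf_ge approx] sum_row_sq_le])
  also have "\<dots> \<le> ennreal (32 * (\<eta> + \<gamma> * sqrt ((1 / real n + 1 / (real s)\<^sup>2) * ln (real k))
      * sqrt (ln (1 / \<delta>)) / \<epsilon>))"
    unfolding \<sigma>_def using k r
    by (intro ennreal_leI error_bound_calibrated_noise_le[OF k n s \<epsilon>(1) \<delta>(1) \<delta>1 _ _ ar \<eta>]
      norm_2_inf_nonneg) auto
  finally show "(\<integral>\<^sup>+ x. ennreal (sup_err k x (\<lambda>i. \<Sum>j<\<nu>. W i j * blurry_deg_dist n s G j))
      \<partial>alg_output n trivial_public_string (gaussian_randomizer l \<sigma> \<nu> s R) (averaged_estimate n l k L)
        vec_space G)
    \<le> ennreal (32 * (\<eta> + \<gamma> * sqrt ((1 / real n + 1 / (real s)\<^sup>2) * ln (real k))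
      * sqrt (ln (1 / \<delta>)) / \<epsilon>))" .
qed

theorem theorem4p2:
  "\<exists>C>0. \<forall>(\<epsilon>::real) (\<delta>::real) (n::nat) (s::nat) (k::nat) (\<eta>::real) (W::nat \<Rightarrow> nat \<Rightarrow> real).
     0 < \<epsilon> \<and> \<epsilon> < 1 \<and> 0 < \<delta> \<and> \<delta> \<le> 1/2 \<and> 1 \<le> n \<and> 1 \<le> s \<and> 2 \<le> k \<and> 0 \<le> \<eta> \<longrightarrow>
     (let \<nu> = nat \<lceil>real n / real s\<rceil> + 1 in
      \<exists>(Prho :: (nat \<Rightarrow> real) measure) (Mb :: (nat \<Rightarrow> real) measure)
         (R :: (nat \<Rightarrow> real) \<Rightarrow> nat \<Rightarrow> nat set \<Rightarrow> (nat \<Rightarrow> real) measure)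
         (P :: (nat \<Rightarrow> (nat \<Rightarrow> real)) \<Rightarrow> (nat \<Rightarrow> real)).
        LNDP \<epsilon> \<delta> n Prho Mb R P vec_space \<and>
        (\<forall>G. simple_graph n G \<longrightarrow>
           (\<integral>\<^sup>+ x. ennreal (sup_err k x (\<lambda>i. \<Sum>j<\<nu>. W i j * blurry_deg_dist n s G j))
              \<partial>alg_output n Prho R P vec_space G)
           \<le> ennreal (C * (\<eta> + gamma_fact \<eta> k \<nu> W
                 * sqrt ((1 / real n + 1 / (real s)\<^sup>2) * ln (real k))
                 * sqrt (ln (1 / \<delta>)) / \<epsilon>))))"
  apply (intro exI[of _ "32::real"] conjI allI impI)
  subgoal by simp
  subgoal premises assms for \<epsilon> \<delta> n s k \<eta> W
  proof -
    from assms have \<epsilon>: "0 < \<epsilon>" "\<epsilon> \<le> 1" and \<delta>: "0 < \<delta>" "\<delta> \<le> 1/2" and n: "0 < n"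
      and s: "0 < s" and k: "2 \<le> k" and \<eta>: "0 \<le> \<eta>" by auto
    define \<nu> where "\<nu> = nat \<lceil>real n / real s\<rceil> + 1"
    obtain l L R where "norm_1_inf k \<nu> (\<lambda>i j. mat_mult l L R i j - W i j) \<le> \<eta>"
      and "0 < norm_1_2 l \<nu> R" and "norm_2_inf k l L * norm_1_2 l \<nu> R \<le> 2 * gamma_fact \<eta> k \<nu> W"
      using gamma_fact_witness[of k \<nu> \<eta> W] k \<eta> unfolding \<nu>_def by auto
    note mechanism = calibrated_gaussian_mechanism[OF \<epsilon> \<delta> n s k \<eta> this]
    show ?thesis
      unfolding Let_def \<nu>_def[symmetric] using mechanism
      by (intro exI conjI allI impI) (assumption, blast)
  qed
  done

end
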